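(* Let $P$ be a finite graded poset with $\hat0$ and with a generalized EW-labeling $\lambda$. Then $Q_\lambda(P)$ is a Whitney dual of $P$.
   Context: Whitney numbers: $w_k(P)=\sum_{\rho(x)=k}\mu(\hat0,x)$, $W_k(P)=|\{x:\rho(x)=k\}|$; $P$ and $Q$ are Whitney duals if $|w_k(P)|=W_k(Q)$ and $|w_k(Q)|=W_k(P)$ for all $k\ge0$. An E-labeling is a map $\lambda$ from the cover relations of $P$ to a poset $\Lambda$; words of labels are read bottom to top; a chain is increasing if its word is strictly increasing and ascent-free if no consecutive labels $a,b$ satisfy $a<b$. ER-labeling: every closed interval has exactly one increasing maximal chain. Rank two switching property: for every saturated chain $\hat0=x_0\lessdot\cdots\lessdot x_k$ and $i$ with $\lambda(x_{i-1}\lessdot x_i)<\lambda(x_i\lessdot x_{i+1})$ there is a unique $x_i'$ with $x_{i-1}\lessdot x_i'\lessdot x_{i+1}$, $\lambda(x_{i-1}\lessdot x_i')=\lambda(x_i\lessdot x_{i+1})$, $\lambda(x_i'\lessdot x_{i+1})=\lambda(x_{i-1}\lessdot x_i)$. The quadratic exchange $U_i$ replaces $x_i$ by $x_i'$ at such an ascent (identity otherwise); $\mathbf c_1\sim_\lambda\mathbf c_2$ for maximal chains of an interval means they are connected by such exchanges (forwards or backwards) within that interval. A generalized EW-labeling is an ER-labeling with the rank two switching property satisfying the braid relation ($U_iU_{i+1}U_i(\mathbf c)=U_{i+1}U_iU_{i+1}(\mathbf c)$ whenever $\mathbf c$ has strictly increasing labels at positions $i,i+1,i+2$) and the cancellative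 property (for $z<x<y$, $\mathbf c$ a maximal chain of $[z,x]$ and $\mathbf c_1,\mathbf c_2$ maximal chains of $[x,y]$: $\mathbf c\cup\mathbf c_1\sim_\lambda\mathbf c\cup\mathbf c_2$ implies $\mathbf c_1\sim_\lambda\mathbf c_2$). $Q_\lambda(P)$: $C(P)$ is the set of saturated chains starting at $\hat0$, ordered by inclusion; for $\mathbf c_1,\mathbf c_2\in C(P)$, $\mathbf c_1\sim\mathbf c_2$ iff they have the same top element $y$ and $\mathbf c_1\sim_\lambda\mathbf c_2$ in $[\hat0,y]$. $Q_\lambda(P)$ is the set of classes ordered by the transitive closure of: $X\le Y$ if some $\mathbf c\in X$, $\mathbf d\in Y$ have $\mathbf c\subseteq\mathbf d$. *)

theory Defs
  imports Main
begin

definition porder :: "'a set \<Rightarrow> ('a \<Rightarrow> 'a \<Rightarrow> bool) \<Rightarrow> bool" where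
  "porder P le \<longleftrightarrow> (\<forall>x\<in>P. le x x) \<and> (\<forall>x\<in>P. \<forall>y\<in>P. le x y \<and> le y x \<longrightarrow> x = y)
     \<and> (\<forall>x\<in>P. \<forall>y\<in>P. \<forall>w\<in>P. le x y \<and> le y w \<longrightarrow> le x w)"

definition lt :: "('a \<Rightarrow> 'a \<Rightarrow> bool) \<Rightarrow> 'a \<Rightarrow> 'a \<Rightarrow> bool" where
  "lt le x y \<longleftrightarrow> le x y \<and> x \<noteq> y"

definition covers :: "'a set \<Rightarrow> ('a \<Rightarrow> 'a \<Rightarrow> bool) \<Rightarrow> 'a \<Rightarrow> 'a \<Rightarrow> bool" where
  "covers P le x y \<longleftrightarrow> x \<in> P \<and> y \<in> P \<and> lt le x y \<and> \<not> (\<exists>w\<in>P. lt le x w \<and> lt le w y)"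

definition sat_chain :: "'a set \<Rightarrow> ('a \<Rightarrow> 'a \<Rightarrow> bool) \<Rightarrow> 'a list \<Rightarrow> bool" where
  "sat_chain P le c \<longleftrightarrow> c \<noteq> [] \<and> set c \<subseteq> P \<and>
     (\<forall>i. Suc i < length c \<longrightarrow> covers P le (c ! i) (c ! Suc i))"

definition max_chain :: "'a set \<Rightarrow> ('a \<Rightarrow> 'a \<Rightarrow> bool) \<Rightarrow> 'a \<Rightarrow> 'a \<Rightarrow> 'a list \<Rightarrow> bool" where
  "max_chain P le x y c \<longleftrightarrow> sat_chain P le c \<and> hd c = x \<and> last c = y"

definition has_zero :: "'a set \<Rightarrow> ('a \<Rightarrow> 'a \<Rightarrow> bool) \<Rightarrow> 'a \<Rightarrow> bool" where
  "has_zero P le z \<longleftrightarrow> z \<in> P \<and> (\<forall>x\<in>P. le z x)"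

definition graded_zero :: "'a set \<Rightarrow> ('a \<Rightarrow> 'a \<Rightarrow> bool) \<Rightarrow> 'a \<Rightarrow> bool" where
  "graded_zero P le z \<longleftrightarrow> porder P le \<and> has_zero P le z \<and>
     (\<exists>\<rho> :: 'a \<Rightarrow> nat. \<rho> z = 0 \<and> (\<forall>x y. covers P le x y \<longrightarrow> \<rho> y = Suc (\<rho> x)))"

text \<open>Rank of x: length of a longest chain from the minimum z to x
  (in a graded poset every maximal chain of [z,x] has this length).\<close>
definition rank :: "'a set \<Rightarrow> ('a \<Rightarrow> 'a \<Rightarrow> bool) \<Rightarrow> 'a \<Rightarrow> 'a \<Rightarrow> nat" where
  "rank P le z x = Max {length c - 1 | c. c \<noteq> [] \<and> set c \<subseteq> P \<and> sorted_wrt (lt le) c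
                                     \<and> hd c = z \<and> last c = x}"

definition mobius :: "'a set \<Rightarrow> ('a \<Rightarrow> 'a \<Rightarrow> bool) \<Rightarrow> 'a \<Rightarrow> 'a \<Rightarrow> int" where
  "mobius P le x y = (THE f :: 'a \<Rightarrow> int. (\<forall>w. f w \<noteq> 0 \<longrightarrow> w \<in> P \<and> le x w) \<and>
      (\<forall>w\<in>P. le x w \<longrightarrow> (\<Sum>u\<in>{u\<in>P. le x u \<and> le u w}. f u) = (if w = x then 1 else 0))) y"

definition whitney_w :: "'a set \<Rightarrow> ('a \<Rightarrow> 'a \<Rightarrow> bool) \<Rightarrow> 'a \<Rightarrow> nat \<Rightarrow> int" where
  "whitney_w P le z k = (\<Sum>x\<in>{x\<in>P. rank P le z x = k}. mobius P le z x)"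

definition whitney_W :: "'a set \<Rightarrow> ('a \<Rightarrow> 'a \<Rightarrow> bool) \<Rightarrow> 'a \<Rightarrow> nat \<Rightarrow> nat" where
  "whitney_W P le z k = card {x\<in>P. rank P le z x = k}"

definition whitney_duals ::
  "'a set \<Rightarrow> ('a \<Rightarrow> 'a \<Rightarrow> bool) \<Rightarrow> 'a \<Rightarrow> 'b set \<Rightarrow> ('b \<Rightarrow> 'b \<Rightarrow> bool) \<Rightarrow> 'b \<Rightarrow> bool" where
  "whitney_duals P le z Q qle zq \<longleftrightarrow>
     (\<forall>k. \<bar>whitney_w P le z k\<bar> = int (whitney_W Q qle zq k) \<and>
          \<bar>whitney_w Q qle zq k\<bar> = int (whitney_W P le z k))"

definition word :: "('a \<Rightarrow> 'a \<Rightarrow> 'l) \<Rightarrow> 'a list \<Rightarrow> 'l list" where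
  "word lam c = map (\<lambda>i. lam (c ! i) (c ! Suc i)) [0..<length c - 1]"

definition increasing :: "('l \<Rightarrow> 'l \<Rightarrow> bool) \<Rightarrow> ('a \<Rightarrow> 'a \<Rightarrow> 'l) \<Rightarrow> 'a list \<Rightarrow> bool" where
  "increasing lle lam c \<longleftrightarrow> sorted_wrt (lt lle) (word lam c)"

definition ER_labeling :: "'a set \<Rightarrow> ('a \<Rightarrow> 'a \<Rightarrow> bool) \<Rightarrow> ('l \<Rightarrow> 'l \<Rightarrow> bool) \<Rightarrow> ('a \<Rightarrow> 'a \<Rightarrow> 'l) \<Rightarrow> bool" where
  "ER_labeling P le lle lam \<longleftrightarrow>
     (\<forall>x\<in>P. \<forall>y\<in>P. le x y \<longrightarrow> (\<exists>!c. max_chain P le x y c \<and> increasing lle lam c))"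

definition ascent :: "('l \<Rightarrow> 'l \<Rightarrow> bool) \<Rightarrow> ('a \<Rightarrow> 'a \<Rightarrow> 'l) \<Rightarrow> 'a list \<Rightarrow> nat \<Rightarrow> bool" where
  "ascent lle lam c i \<longleftrightarrow> 0 < i \<and> Suc i < length c \<and>
     lt lle (lam (c ! (i - 1)) (c ! i)) (lam (c ! i) (c ! Suc i))"

definition swap_ok :: "'a set \<Rightarrow> ('a \<Rightarrow> 'a \<Rightarrow> bool) \<Rightarrow> ('a \<Rightarrow> 'a \<Rightarrow> 'l) \<Rightarrow> 'a \<Rightarrow> 'a \<Rightarrow> 'a \<Rightarrow> 'a \<Rightarrow> bool" where
  "swap_ok P le lam u v w v' \<longleftrightarrow> covers P le u v' \<and> covers P le v' w \<and>
     lam u v' = lam v w \<and> lam v' w = lam u v"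

definition rank_two_switching ::
  "'a set \<Rightarrow> ('a \<Rightarrow> 'a \<Rightarrow> bool) \<Rightarrow> 'a \<Rightarrow> ('l \<Rightarrow> 'l \<Rightarrow> bool) \<Rightarrow> ('a \<Rightarrow> 'a \<Rightarrow> 'l) \<Rightarrow> bool" where
  "rank_two_switching P le z lle lam \<longleftrightarrow>
     (\<forall>c i. sat_chain P le c \<and> hd c = z \<and> ascent lle lam c i \<longrightarrow>
        (\<exists>!v'. swap_ok P le lam (c ! (i - 1)) (c ! i) (c ! Suc i) v'))"

definition U :: "'a set \<Rightarrow> ('a \<Rightarrow> 'a \<Rightarrow> bool) \<Rightarrow> ('l \<Rightarrow> 'l \<Rightarrow> bool) \<Rightarrow> ('a \<Rightarrow> 'a \<Rightarrow> 'l)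
                 \<Rightarrow> nat \<Rightarrow> 'a list \<Rightarrow> 'a list" where
  "U P le lle lam i c = (if ascent lle lam c i
      then c[i := (THE v'. swap_ok P le lam (c ! (i - 1)) (c ! i) (c ! Suc i) v')] else c)"

definition braid_relation ::
  "'a set \<Rightarrow> ('a \<Rightarrow> 'a \<Rightarrow> bool) \<Rightarrow> 'a \<Rightarrow> ('l \<Rightarrow> 'l \<Rightarrow> bool) \<Rightarrow> ('a \<Rightarrow> 'a \<Rightarrow> 'l) \<Rightarrow> bool" where
  "braid_relation P le z lle lam \<longleftrightarrow>
     (\<forall>c i. sat_chain P le c \<and> hd c = z \<and> 0 < i \<and> i + 2 < length c \<and>
        lt lle (lam (c ! (i - 1)) (c ! i)) (lam (c ! i) (c ! (i + 1))) \<and>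
        lt lle (lam (c ! i) (c ! (i + 1))) (lam (c ! (i + 1)) (c ! (i + 2))) \<longrightarrow>
        U P le lle lam i (U P le lle lam (i + 1) (U P le lle lam i c)) =
        U P le lle lam (i + 1) (U P le lle lam i (U P le lle lam (i + 1) c)))"

definition xstep :: "'a set \<Rightarrow> ('a \<Rightarrow> 'a \<Rightarrow> bool) \<Rightarrow> ('l \<Rightarrow> 'l \<Rightarrow> bool) \<Rightarrow> ('a \<Rightarrow> 'a \<Rightarrow> 'l)
                     \<Rightarrow> 'a list \<Rightarrow> 'a list \<Rightarrow> bool" where
  "xstep P le lle lam c d \<longleftrightarrow> (\<exists>i v'. ascent lle lam c i \<and>
      swap_ok P le lam (c ! (i - 1)) (c ! i) (c ! Suc i) v' \<and> d = c[i := v'])"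

definition lam_equiv :: "'a set \<Rightarrow> ('a \<Rightarrow> 'a \<Rightarrow> bool) \<Rightarrow> ('l \<Rightarrow> 'l \<Rightarrow> bool) \<Rightarrow> ('a \<Rightarrow> 'a \<Rightarrow> 'l)
                         \<Rightarrow> 'a \<Rightarrow> 'a \<Rightarrow> 'a list \<Rightarrow> 'a list \<Rightarrow> bool" where
  "lam_equiv P le lle lam x y c d \<longleftrightarrow> max_chain P le x y c \<and> max_chain P le x y d \<and>
     (\<lambda>c1 c2. max_chain P le x y c1 \<and> max_chain P le x y c2 \<and>
        (xstep P le lle lam c1 c2 \<or> xstep P le lle lam c2 c1))\<^sup>*\<^sup>* c d"

definition cancellative :: "'a set \<Rightarrow> ('a \<Rightarrow> 'a \<Rightarrow> bool) \<Rightarrow> ('l \<Rightarrow> 'l \<Rightarrow> bool) \<Rightarrow> ('a \<Rightarrow> 'a \<Rightarrow> 'l) \<Rightarrow> bool" where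
  "cancellative P le lle lam \<longleftrightarrow>
     (\<forall>w x y c c1 c2. w \<in> P \<and> x \<in> P \<and> y \<in> P \<and> lt le w x \<and> lt le x y \<and>
        max_chain P le w x c \<and> max_chain P le x y c1 \<and> max_chain P le x y c2 \<and>
        lam_equiv P le lle lam w y (c @ tl c1) (c @ tl c2) \<longrightarrow>
        lam_equiv P le lle lam x y c1 c2)"

definition generalized_EW_labeling ::
  "'a set \<Rightarrow> ('a \<Rightarrow> 'a \<Rightarrow> bool) \<Rightarrow> 'a \<Rightarrow> ('l \<Rightarrow> 'l \<Rightarrow> bool) \<Rightarrow> ('a \<Rightarrow> 'a \<Rightarrow> 'l) \<Rightarrow> bool" where
  "generalized_EW_labeling P le z lle lam \<longleftrightarrow>
     ER_labeling P le lle lam \<and> rank_two_switching P le z lle lam \<and>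
     braid_relation P le z lle lam \<and> cancellative P le lle lam"

definition CP :: "'a set \<Rightarrow> ('a \<Rightarrow> 'a \<Rightarrow> bool) \<Rightarrow> 'a \<Rightarrow> 'a list set" where
  "CP P le z = {c. sat_chain P le c \<and> hd c = z}"

definition Qrel :: "'a set \<Rightarrow> ('a \<Rightarrow> 'a \<Rightarrow> bool) \<Rightarrow> 'a \<Rightarrow> ('l \<Rightarrow> 'l \<Rightarrow> bool) \<Rightarrow> ('a \<Rightarrow> 'a \<Rightarrow> 'l)
                    \<Rightarrow> ('a list \<times> 'a list) set" where
  "Qrel P le z lle lam = {(c, d). c \<in> CP P le z \<and> d \<in> CP P le z \<and> last c = last d \<and>
                                 lam_equiv P le lle lam z (last c) c d}"

definition Qcarrier :: "'a set \<Rightarrow> ('a \<Rightarrow> 'a \<Rightarrow> bool) \<Rightarrow> 'a \<Rightarrow> ('l \<Rightarrow> 'l \<Rightarrow> bool) \<Rightarrow> ('a \<Rightarrow> 'a \<Rightarrow> 'l)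
                        \<Rightarrow> 'a list set set" where
  "Qcarrier P le z lle lam = CP P le z // Qrel P le z lle lam"

definition Qle :: "'a set \<Rightarrow> ('a \<Rightarrow> 'a \<Rightarrow> bool) \<Rightarrow> 'a \<Rightarrow> ('l \<Rightarrow> 'l \<Rightarrow> bool) \<Rightarrow> ('a \<Rightarrow> 'a \<Rightarrow> 'l)
                   \<Rightarrow> 'a list set \<Rightarrow> 'a list set \<Rightarrow> bool" where
  "Qle P le z lle lam = (\<lambda>X Y. X \<in> Qcarrier P le z lle lam \<and> Y \<in> Qcarrier P le z lle lam \<and>
                                (\<exists>c\<in>X. \<exists>d\<in>Y. set c \<subseteq> set d))\<^sup>+\<^sup>+"

end

theory Submission
  imports Defs "HOL-Library.Confluence"
begin

(*
  For P, the defining recursion of the Moebius function is verified for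
  mu(z, x) = (-1)^rk(x) times the number of ascent-free maximal chains of [z, x]:
  an ascent-free chain c from z, followed by the unique increasing chain from the end of c
  to w, is a maximal chain of [z, w] cut at a position j, and for each maximal chain the
  admissible cuts are either none or two consecutive ones, so the signed sum vanishes.

  For Q, quadratic exchanges at ascents strictly decrease the number of ascending
  pairs of labels, and the braid relation makes them locally confluent; by Newman's lemma
  every class of Q contains exactly one ascent-free chain, so the rank-k elements of Q are
  counted by |w_k(P)|. The same argument applied to exchanges above a fixed position j,
  together with the cancellative property, shows that mu_Q(0, X) = (-1)^rk(X) if X contains
  the increasing chain to its top and 0 otherwise, hence |w_k(Q)| = W_k(P).
*)

lemma porderD:
  assumes "porder A r"
  shows "x \<in> A \<Longrightarrow> r x x"
    and "x \<in> A \<Longrightarrow> y \<in> A \<Longrightarrow> r x y \<Longrightarrow> r y x \<Longrightarrow> x = y"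
    and "x \<in> A \<Longrightarrow> y \<in> A \<Longrightarrow> w \<in> A \<Longrightarrow> r x y \<Longrightarrow> r y w \<Longrightarrow> r x w"
  using assms unfolding porder_def by blast+

lemma porder_lt_trans:
  assumes "porder A r" "x \<in> A" "y \<in> A" "w \<in> A" "lt r x y" "lt r y w"
  shows "lt r x w"
  using assms porderD[OF assms(1)] unfolding lt_def by metis

lemma covers_lt: "covers A r x y \<Longrightarrow> lt r x y"
  unfolding covers_def by auto

lemma last_take_Suc: "j < length c \<Longrightarrow> last (take (Suc j) c) = c ! j"
  by (metis last_snoc take_Suc_conv_app_nth)

lemma take_Suc_append_tl_drop: "j < length c \<Longrightarrow> take (Suc j) c @ tl (drop j c) = c"
  by (simp add: Cons_nth_drop_Suc[symmetric])

lemma hd_list_update_pos: "0 < i \<Longrightarrow> hd (xs[i := x]) = hd xs"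
  by (cases xs; cases i) auto

lemma length_le_if_take_eq:
  assumes "take (length c) d = c"
  shows "length c \<le> length d"
proof -
  have "length (take (length c) d) = length c" using assms by simp
  then show ?thesis by (simp add: min_def split: if_splits)
qed

lemma last_append_tl: "s \<noteq> [] \<Longrightarrow> last p = hd s \<Longrightarrow> last (p @ tl s) = last s"
  by (cases s) auto

lemma drop_append_tl: "p \<noteq> [] \<Longrightarrow> s \<noteq> [] \<Longrightarrow> last p = hd s \<Longrightarrow> drop (length p - 1) (p @ tl s) = s"
  by (cases s; cases p rule: rev_cases) auto

lemma nth_append_tl:
  assumes "p \<noteq> []" "last p = hd s" "m < length s"
  shows "(p @ tl s) ! (length p - 1 + m) = s ! m"
  using assms by (cases s; cases p rule: rev_cases) (auto simp: nth_append nth_Cons')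

lemma sat_chain_iff_successively:
  "sat_chain A r c \<longleftrightarrow> c \<noteq> [] \<and> set c \<subseteq> A \<and> successively (covers A r) c"
  unfolding sat_chain_def successively_conv_nth ..

lemma sat_chainD:
  assumes "sat_chain A r c"
  shows "c \<noteq> []" "set c \<subseteq> A" "\<And>i. Suc i < length c \<Longrightarrow> covers A r (c ! i) (c ! Suc i)"
  using assms unfolding sat_chain_def by auto

lemma sat_chain_singleton: "x \<in> A \<Longrightarrow> sat_chain A r [x]"
  unfolding sat_chain_def by auto

lemma sat_chain_nth_mem: "sat_chain A r c \<Longrightarrow> i < length c \<Longrightarrow> c ! i \<in> A"
  unfolding sat_chain_def by auto

lemma sat_chain_last_mem: "sat_chain A r c \<Longrightarrow> last c \<in> A"
  unfolding sat_chain_def by auto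

lemma sat_chain_join:
  assumes p: "sat_chain A r p" and s: "sat_chain A r s" and ps: "last p = hd s"
  shows "sat_chain A r (p @ tl s)"
proof -
  have s': "s = hd s # tl s" using s by (simp add: sat_chain_def)
  have "successively (covers A r) (hd s # tl s)" "set (hd s # tl s) \<subseteq> A"
    using s s' unfolding sat_chain_iff_successively by metis+
  then show ?thesis using p ps unfolding sat_chain_iff_successively
    by (auto simp: successively_append_iff successively_Cons)
qed

lemma sat_chain_take:
  "sat_chain A r c \<Longrightarrow> j < length c \<Longrightarrow> sat_chain A r (take (Suc j) c)"
  unfolding sat_chain_def by (auto dest: in_set_takeD)

lemma sat_chain_drop:
  "sat_chain A r c \<Longrightarrow> j < length c \<Longrightarrow> sat_chain A r (drop j c)"
  unfolding sat_chain_def by (auto dest: in_set_dropD)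

lemma sat_chain_take_max_chain:
  assumes "sat_chain A r c" "j < length c"
  shows "max_chain A r (hd c) (c ! j) (take (Suc j) c)"
  using sat_chain_take[OF assms] assms last_take_Suc[OF assms(2)]
  unfolding max_chain_def by (auto simp: hd_conv_nth)

lemma sat_chain_drop_max_chain:
  assumes "sat_chain A r c" "j < length c"
  shows "max_chain A r (c ! j) (last c) (drop j c)"
  using sat_chain_drop[OF assms] hd_drop_conv_nth[OF assms(2)] assms(2)
  unfolding max_chain_def by simp

lemma sat_chain_exists:
  assumes fin: "finite A" and po: "porder A r"
  shows "x \<in> A \<Longrightarrow> y \<in> A \<Longrightarrow> r x y \<Longrightarrow> \<exists>c. sat_chain A r c \<and> hd c = x \<and> last c = y"
proof (induction "card {w\<in>A. lt r x w \<and> lt r w y}" arbitrary: x y rule: less_induct)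
  case less
  show ?case
  proof (cases "\<exists>w\<in>A. lt r x w \<and> lt r w y")
    case False
    show ?thesis
    proof (cases "x = y")
      case True then show ?thesis using less.prems by (intro exI[of _ "[x]"]) (auto simp: sat_chain_def)
    next
      case False
      then have "covers A r x y" using less.prems \<open>\<not> (\<exists>w\<in>A. _)\<close> unfolding covers_def lt_def by auto
      then show ?thesis by (intro exI[of _ "[x,y]"]) (auto simp: sat_chain_def covers_def nth_Cons')
    qed
  next
    case True
    then obtain w where w: "w \<in> A" "lt r x w" "lt r w y" by blast
    have fin_between: "finite {v\<in>A. lt r x v \<and> lt r v y}" using fin by auto
    have below_w: "{v\<in>A. lt r x v \<and> lt r v w} \<subset> {v\<in>A. lt r x v \<and> lt r v y}"
    proof
      show "{v\<in>A. lt r x v \<and> lt r v w} \<subseteq> {v\<in>A. lt r x v \<and> lt r v y}"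
        using w less.prems by (auto intro: porder_lt_trans[OF po])
      show "{v\<in>A. lt r x v \<and> lt r v w} \<noteq> {v\<in>A. lt r x v \<and> lt r v y}"
        using w by (auto simp: lt_def)
    qed
    have above_w: "{v\<in>A. lt r w v \<and> lt r v y} \<subset> {v\<in>A. lt r x v \<and> lt r v y}"
    proof
      show "{v\<in>A. lt r w v \<and> lt r v y} \<subseteq> {v\<in>A. lt r x v \<and> lt r v y}"
        using w less.prems by (auto intro: porder_lt_trans[OF po])
      show "{v\<in>A. lt r w v \<and> lt r v y} \<noteq> {v\<in>A. lt r x v \<and> lt r v y}"
        using w by (auto simp: lt_def)
    qed
    obtain c1 where c1: "sat_chain A r c1" "hd c1 = x" "last c1 = w"
      using less.hyps[OF psubset_card_mono[OF fin_between below_w]] less.prems w by (auto simp: lt_def)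
    obtain c2 where c2: "sat_chain A r c2" "hd c2 = w" "last c2 = y"
      using less.hyps[OF psubset_card_mono[OF fin_between above_w]] less.prems w by (auto simp: lt_def)
    have "c2 \<noteq> []" using c2 sat_chainD by auto
    then show ?thesis using sat_chain_join[OF c1(1) c2(1)] c1 c2 sat_chainD(1)[OF c1(1)]
      by (intro exI[of _ "c1 @ tl c2"]) (auto simp: last_append_tl)
  qed
qed

lemma grading_nth:
  assumes grading: "\<And>x y. covers A r x y \<Longrightarrow> f y = Suc (f x)" and c: "sat_chain A r c"
  shows "i < length c \<Longrightarrow> f (c ! i) = f (hd c) + i"
proof (induction i)
  case 0 then show ?case using c sat_chainD by (simp add: hd_conv_nth)
next
  case (Suc i)
  then have "covers A r (c ! i) (c ! Suc i)" using sat_chainD(3)[OF c] by simp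
  then show ?case using Suc grading by simp
qed

lemma grading_last:
  assumes grading: "\<And>x y. covers A r x y \<Longrightarrow> f y = Suc (f x)" and c: "sat_chain A r c"
  shows "f (last c) = f (hd c) + (length c - 1)"
  using grading_nth[of A r f, OF grading c, of "length c - 1"] sat_chainD(1)[OF c]
  by (simp add: last_conv_nth)

lemma sat_chain_lt:
  assumes po: "porder A r" and c: "sat_chain A r c"
  shows "i < k \<Longrightarrow> k < length c \<Longrightarrow> lt r (c ! i) (c ! k)"
proof (induction k)
  case 0 then show ?case by simp
next
  case (Suc k)
  have step: "lt r (c ! k) (c ! Suc k)" using covers_lt[OF sat_chainD(3)[OF c]] Suc.prems by simp
  show ?case
  proof (cases "i = k")
    case False
    then have "lt r (c ! i) (c ! k)" using Suc by simp
    then show ?thesis using porder_lt_trans[OF po _ _ _ _ step] sat_chain_nth_mem[OF c] Suc.prems by simp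
  qed (use step in simp)
qed

lemma sat_chain_sorted:
  assumes "porder A r" "sat_chain A r c"
  shows "sorted_wrt (lt r) c"
  using sat_chain_lt[OF assms] by (simp add: sorted_wrt_iff_nth_less)

lemma sat_chain_le:
  assumes po: "porder A r" and c: "sat_chain A r c"
  shows "i \<le> k \<Longrightarrow> k < length c \<Longrightarrow> r (c ! i) (c ! k)"
  using sat_chain_lt[OF po c, of i k] porderD(1)[OF po] sat_chain_nth_mem[OF c]
  by (cases "i = k") (auto simp: lt_def)

lemma grading_strict_mono:
  assumes fin: "finite A" and po: "porder A r"
    and grading: "\<And>x y. covers A r x y \<Longrightarrow> f y = Suc (f x)"
    and xy: "x \<in> A" "y \<in> A" "lt r x y"
  shows "f x < f y"
proof -
  obtain c where c: "sat_chain A r c" "hd c = x" "last c = y"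
    using sat_chain_exists[OF fin po] xy by (auto simp: lt_def)
  have "1 < length c"
    using c xy sat_chainD(1)[OF c(1)] by (cases c) (auto simp: lt_def)
  then show ?thesis
    using grading_last[of A r f, OF grading c(1)] c sat_chainD(1)[OF c(1)] by auto
qed

lemma grading_sorted_nth:
  assumes fin: "finite A" and po: "porder A r"
    and grading: "\<And>x y. covers A r x y \<Longrightarrow> f y = Suc (f x)"
    and c: "set c \<subseteq> A" "sorted_wrt (lt r) c"
  shows "i < length c \<Longrightarrow> f (c ! 0) + i \<le> f (c ! i)"
proof (induction i)
  case 0 then show ?case by simp
next
  case (Suc i)
  have "lt r (c ! i) (c ! Suc i)" using c(2) Suc.prems by (simp add: sorted_wrt_iff_nth_less)
  then have "f (c ! i) < f (c ! Suc i)"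
    using grading_strict_mono[of A r f, OF fin po grading] c(1) Suc.prems by (meson Suc_lessD nth_mem subsetD)
  then show ?case using Suc by auto
qed

lemma rank_eq_grading:
  assumes fin: "finite A" and po: "porder A r" and zero: "has_zero A r a"
    and grading: "\<And>x y. covers A r x y \<Longrightarrow> f y = Suc (f x)" and fa: "f a = 0"
    and x: "x \<in> A"
  shows "rank A r a x = f x"
proof -
  define S where "S = {length c - 1 | c. c \<noteq> [] \<and> set c \<subseteq> A \<and> sorted_wrt (lt r) c
                                     \<and> hd c = a \<and> last c = x}"
  have a: "a \<in> A" "r a x" using zero x unfolding has_zero_def by auto
  obtain c where c: "sat_chain A r c" "hd c = a" "last c = x"
    using sat_chain_exists[OF fin po a(1) x a(2)] by blast
  have "length c - 1 \<in> S"
    unfolding S_def using c sat_chainD[OF c(1)] sat_chain_sorted[OF po c(1)] by blast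
  moreover have "length c - 1 = f x" using grading_last[of A r f, OF grading c(1)] c fa by simp
  moreover have bounded: "\<forall>n\<in>S. n \<le> f x"
  proof
    fix n assume "n \<in> S"
    then obtain d where d: "n = length d - 1" "d \<noteq> []" "set d \<subseteq> A" "sorted_wrt (lt r) d"
      "hd d = a" "last d = x" unfolding S_def by blast
    show "n \<le> f x"
      using grading_sorted_nth[of A r f, OF fin po grading d(3,4), of "length d - 1"] d fa
      by (simp add: hd_conv_nth last_conv_nth)
  qed
  moreover have "finite S" using bounded by (meson finite_atMost finite_subset atMost_iff subsetI)
  ultimately have "Max S = f x" by (metis Max_eqI)
  then show ?thesis unfolding rank_def S_def by simp
qed

lemma mobius_eqI:
  assumes fin: "finite A" and po: "porder A r"
    and support: "\<And>w. g w \<noteq> 0 \<Longrightarrow> w \<in> A \<and> r a w"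
    and recursion: "\<And>w. w \<in> A \<Longrightarrow> r a w \<Longrightarrow>
         (\<Sum>u\<in>{u\<in>A. r a u \<and> r u w}. g u) = (if w = a then 1 else 0)"
  shows "mobius A r a y = g y"
proof -
  define is_mobius where "is_mobius = (\<lambda>f :: 'a \<Rightarrow> int. (\<forall>w. f w \<noteq> 0 \<longrightarrow> w \<in> A \<and> r a w) \<and>
      (\<forall>w\<in>A. r a w \<longrightarrow> (\<Sum>u\<in>{u\<in>A. r a u \<and> r u w}. f u) = (if w = a then 1 else 0)))"
  have g: "is_mobius g" unfolding is_mobius_def using support recursion by blast
  have "h w = g w" if h: "is_mobius h" for h w
  proof (induction "card {v\<in>A. r v w}" arbitrary: w rule: less_induct)
    case less
    show ?case
    proof (cases "w \<in> A \<and> r a w")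
      case False
      then show ?thesis using h g unfolding is_mobius_def by metis
    next
      case True
      define S where "S = {u\<in>A. r a u \<and> r u w}"
      have S: "finite S" "w \<in> S" using fin True porderD(1)[OF po] S_def by auto
      have "h u = g u" if "u \<in> S - {w}" for u
      proof -
        have u: "u \<in> A" "r u w" "u \<noteq> w" using that S_def by auto
        have "{v\<in>A. r v u} \<subset> {v\<in>A. r v w}"
          using u True porderD[OF po] by blast
        then show ?thesis using less fin by (simp add: psubset_card_mono)
      qed
      then have "(\<Sum>u\<in>S-{w}. h u) = (\<Sum>u\<in>S-{w}. g u)" by (rule sum.cong[OF refl])
      moreover have "(\<Sum>u\<in>S. h u) = (\<Sum>u\<in>S. g u)"
        using h g True unfolding is_mobius_def S_def by simp
      ultimately show ?thesis using S by (simp add: sum.remove)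
    qed
  qed
  then have "(THE f. is_mobius f) = g" using g by (intro the_equality) auto
  then show ?thesis unfolding mobius_def is_mobius_def by simp
qed

section \<open>Normal forms of terminating, locally confluent relations\<close>

lemma newman:
  assumes wf: "wf {(y, x). R x y}"
    and local_confluence: "\<And>a b c. R a b \<Longrightarrow> R a c \<Longrightarrow> \<exists>d. R\<^sup>*\<^sup>* b d \<and> R\<^sup>*\<^sup>* c d"
  shows "confluentp R"
proof (rule confluentpI)
  show "\<exists>d. R\<^sup>*\<^sup>* b d \<and> R\<^sup>*\<^sup>* c d" if "R\<^sup>*\<^sup>* a b" "R\<^sup>*\<^sup>* a c" for a b c
    using that
  proof (induction a arbitrary: b c rule: wf_induct[OF wf])
    case (1 a)
    show ?case
    proof (cases "a = b \<or> a = c")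
      case True then show ?thesis using 1 by blast
    next
      case False
      then obtain b1 c1 where b1: "R a b1" "R\<^sup>*\<^sup>* b1 b" and c1: "R a c1" "R\<^sup>*\<^sup>* c1 c"
        using 1(2,3) by (metis converse_rtranclpE)
      obtain d1 where d1: "R\<^sup>*\<^sup>* b1 d1" "R\<^sup>*\<^sup>* c1 d1" using local_confluence[OF b1(1) c1(1)] by blast
      have "(b1, a) \<in> {(y, x). R x y}" "(c1, a) \<in> {(y, x). R x y}" using b1 c1 by simp_all
      note IH = "1"(1)[rule_format, OF this(1)] "1"(1)[rule_format, OF this(2)]
      obtain e where e: "R\<^sup>*\<^sup>* b e" "R\<^sup>*\<^sup>* d1 e" using IH(1)[OF b1(2) d1(1)] by blast
      obtain f where f: "R\<^sup>*\<^sup>* c f" "R\<^sup>*\<^sup>* e f"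
        using IH(2)[OF c1(2) rtranclp_trans[OF d1(2) e(2)]] by blast
      show ?thesis using rtranclp_trans[OF e(1) f(2)] f(1) by blast
    qed
  qed
qed

lemma equivclp_normal_forms_eq:
  assumes "confluentp R" "equivclp R a b" "\<And>y. \<not> R a y" "\<And>y. \<not> R b y"
  shows "a = b"
proof -
  have "(R\<^sup>*\<^sup>* OO R\<inverse>\<inverse>\<^sup>*\<^sup>*) a b"
    using assms(1,2) semiconfluentp_equivclp confluentp_imp_semiconfluentp by metis
  then obtain d where "R\<^sup>*\<^sup>* a d" "R\<^sup>*\<^sup>* b d" by (auto simp: rtranclp_conversep)
  then show ?thesis using assms(3,4) by (metis converse_rtranclpE)
qed

definition ascending_pairs :: "('l \<Rightarrow> 'l \<Rightarrow> bool) \<Rightarrow> 'l list \<Rightarrow> (nat \<times> nat) set" where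
  "ascending_pairs lle w = {(a, b). a < b \<and> b < length w \<and> lt lle (w ! a) (w ! b)}"

lemma card_ascending_pairs_swap_less:
  assumes poL: "porder L lle" and wL: "set w \<subseteq> L" and i: "Suc i < length w"
    and asc: "lt lle (w ! i) (w ! Suc i)"
  shows "card (ascending_pairs lle (w[i := w ! Suc i, Suc i := w ! i]))
         < card (ascending_pairs lle w)"
proof -
  define w' where "w' = w[i := w ! Suc i, Suc i := w ! i]"
  define s where "s = (\<lambda>k. if k = i then Suc i else if k = Suc i then i else k)"
  define g where "g = (\<lambda>(a, b). (s a, s b))"
  have w'_nth: "k < length w \<Longrightarrow> w' ! k = w ! (s k)" for k
    unfolding w'_def s_def using i by (auto simp: nth_list_update)
  have no_desc: "\<not> lt lle (w ! Suc i) (w ! i)"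
  proof
    assume "lt lle (w ! Suc i) (w ! i)"
    moreover have "w ! i \<in> L" "w ! Suc i \<in> L" using wL i by auto
    ultimately show False using asc porderD(2)[OF poL] unfolding lt_def by metis
  qed
  have image: "g ` ascending_pairs lle w' \<subseteq> ascending_pairs lle w - {(i, Suc i)}"
  proof
    fix p assume "p \<in> g ` ascending_pairs lle w'"
    then obtain a b where ab: "a < b" "b < length w" "lt lle (w ! s a) (w ! s b)" "p = (s a, s b)"
      using w'_nth unfolding ascending_pairs_def w'_def g_def by auto
    then have "(a, b) \<noteq> (i, Suc i)" using no_desc unfolding s_def by auto
    then show "p \<in> ascending_pairs lle w - {(i, Suc i)}"
      using ab i unfolding ascending_pairs_def s_def by auto
  qed
  have inj: "inj_on g (ascending_pairs lle w')"
    unfolding g_def s_def by (rule inj_onI) (auto split: if_splits)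
  have fin: "finite (ascending_pairs lle w)"
    by (rule finite_subset[of _ "{..<length w} \<times> {..<length w}"]) (auto simp: ascending_pairs_def)
  have mem: "(i, Suc i) \<in> ascending_pairs lle w" using i asc by (simp add: ascending_pairs_def)
  have "card (ascending_pairs lle w') = card (g ` ascending_pairs lle w')"
    using inj by (simp add: card_image)
  also have "\<dots> \<le> card (ascending_pairs lle w - {(i, Suc i)})"
    using image fin by (simp add: card_mono)
  also have "\<dots> < card (ascending_pairs lle w)"
    using fin mem by (rule card_Diff1_less)
  finally show ?thesis unfolding w'_def .
qed

lemma switch_positions_cases:
  fixes A :: "nat \<Rightarrow> bool"
  assumes n: "0 < n"
  defines "J \<equiv> {j. j \<le> n \<and> (\<forall>i. 0 < i \<and> i < j \<longrightarrow> \<not> A i) \<and> (\<forall>i. j < i \<and> i < n \<longrightarrow> A i)}"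
  obtains "J = {}" | q where "J = {q, Suc q}"
proof -
  define p where "p = (LEAST i. 0 < i \<and> (i < n \<longrightarrow> A i))"
  have p: "0 < p" "p < n \<longrightarrow> A p" "p \<le> n"
    using LeastI[of "\<lambda>i. 0 < i \<and> (i < n \<longrightarrow> A i)" n] Least_le[of "\<lambda>i. 0 < i \<and> (i < n \<longrightarrow> A i)" n] n
    unfolding p_def by auto
  have below_p: "\<not> A i" if "0 < i" "i < p" for i
    using that not_less_Least[of i "\<lambda>i. 0 < i \<and> (i < n \<longrightarrow> A i)"] p unfolding p_def by auto
  obtain q where q: "p = Suc q" using p(1) by (cases p) auto
  have "J \<subseteq> {q, p}"
  proof
    fix j assume j: "j \<in> J"
    have "\<not> p < j" using j p unfolding J_def by auto
    moreover have "\<not> j < q" using j below_p[of q] q p(3) unfolding J_def by auto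
    ultimately show "j \<in> {q, p}" using q by auto
  qed
  moreover have "q \<in> J \<longleftrightarrow> p \<in> J"
  proof -
    have "A i" if "q < i" "i < n" "\<forall>i. p < i \<and> i < n \<longrightarrow> A i" for i
      using that p(2) q by (cases "i = p") auto
    then have "(\<forall>i. q < i \<and> i < n \<longrightarrow> A i) \<longleftrightarrow> (\<forall>i. p < i \<and> i < n \<longrightarrow> A i)"
      using q by auto
    then show ?thesis using below_p p(3) q unfolding J_def by auto
  qed
  ultimately show thesis using that q by blast
qed

lemma alternating_sum_switch_positions:
  fixes A :: "nat \<Rightarrow> bool"
  assumes "0 < n"
  shows "(\<Sum>j\<in>{j. j \<le> n \<and> (\<forall>i. 0 < i \<and> i < j \<longrightarrow> \<not> A i) \<and> (\<forall>i. j < i \<and> i < n \<longrightarrow> A i)}.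
           (-1::int) ^ j) = 0"
proof (cases rule: switch_positions_cases[OF assms, of A])
  case 1 then show ?thesis unfolding 1 by simp
next
  case (2 q) then show ?thesis unfolding 2 by simp
qed

locale EW_labeled_poset =
  fixes P :: "'a set" and le :: "'a \<Rightarrow> 'a \<Rightarrow> bool" and z :: 'a
    and L :: "'l set" and lle :: "'l \<Rightarrow> 'l \<Rightarrow> bool" and lam :: "'a \<Rightarrow> 'a \<Rightarrow> 'l"
  assumes finite_P: "finite P"
    and graded: "graded_zero P le z"
    and porder_L: "porder L lle"
    and label_in_L: "\<forall>x y. covers P le x y \<longrightarrow> lam x y \<in> L"
    and EW_labeling: "generalized_EW_labeling P le z lle lam"
begin

abbreviation rk :: "'a \<Rightarrow> nat" where "rk \<equiv> rank P le z"

abbreviation "CPz \<equiv> CP P le z"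

lemma porder_P: "porder P le"
  using graded unfolding graded_zero_def by simp

lemma has_zero: "has_zero P le z"
  using graded unfolding graded_zero_def by simp

lemma z_in_P: "z \<in> P"
  using has_zero unfolding has_zero_def by simp

lemma z_le: "x \<in> P \<Longrightarrow> le z x"
  using has_zero unfolding has_zero_def by simp

lemma ER_labeling_lam: "ER_labeling P le lle lam"
  and rank_two_switching_lam: "rank_two_switching P le z lle lam"
  and braid_relation_lam: "braid_relation P le z lle lam"
  and cancellative_lam: "cancellative P le lle lam"
  using EW_labeling unfolding generalized_EW_labeling_def by simp_all

lemma rk_zero: "rk z = 0"
  and rk_covers: "covers P le x y \<Longrightarrow> rk y = Suc (rk x)"
proof -
  obtain f where f: "f z = 0" "\<And>x y. covers P le x y \<Longrightarrow> f y = Suc (f x)"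
    using graded unfolding graded_zero_def by blast
  have rk_f: "x \<in> P \<Longrightarrow> rk x = f x" for x
    using rank_eq_grading[of P le z f, OF finite_P porder_P has_zero f(2) f(1)] .
  show "rk z = 0" using rk_f[OF z_in_P] f(1) by simp
  show "rk y = Suc (rk x)" if xy: "covers P le x y"
  proof -
    have "x \<in> P" "y \<in> P" using xy unfolding covers_def by auto
    then show ?thesis using rk_f f(2)[OF xy] by simp
  qed
qed

lemma rk_strict_mono: "x \<in> P \<Longrightarrow> y \<in> P \<Longrightarrow> lt le x y \<Longrightarrow> rk x < rk y"
  using grading_strict_mono[of P le rk, OF finite_P porder_P rk_covers] by blast

lemma rk_pos: "w \<in> P \<Longrightarrow> w \<noteq> z \<Longrightarrow> 0 < rk w"
  using rk_strict_mono[OF z_in_P, of w] z_le rk_zero unfolding lt_def by auto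

lemma sat_chain_rk_nth: "sat_chain P le c \<Longrightarrow> i < length c \<Longrightarrow> rk (c ! i) = rk (hd c) + i"
  using grading_nth[of P le rk, OF rk_covers] by blast

lemma sat_chain_length: "sat_chain P le c \<Longrightarrow> length c = Suc (rk (last c) - rk (hd c))"
  using grading_last[of P le rk, OF rk_covers, of c] sat_chainD(1)[of P le c] by (cases c) auto

lemma zero_chain_rk_nth: "sat_chain P le c \<Longrightarrow> hd c = z \<Longrightarrow> i < length c \<Longrightarrow> rk (c ! i) = i"
  using sat_chain_rk_nth rk_zero by simp

lemma zero_chain_length: "sat_chain P le c \<Longrightarrow> hd c = z \<Longrightarrow> length c = Suc (rk (last c))"
  using sat_chain_length rk_zero by simp

lemma max_chain_interval:
  assumes "max_chain P le x y c"
  shows "x \<in> P" "y \<in> P" "le x y"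
proof -
  have c: "sat_chain P le c" "hd c = x" "last c = y" "c \<noteq> []"
    using assms unfolding max_chain_def sat_chain_def by auto
  show "x \<in> P" "y \<in> P" using c sat_chainD(2)[OF c(1)] by auto
  have "le (c ! 0) (c ! (length c - 1))" using sat_chain_le[OF porder_P c(1), of 0 "length c - 1"] c(4) by simp
  then show "le x y" using c by (simp add: hd_conv_nth last_conv_nth)
qed

lemma max_chain_length: "max_chain P le x y c \<Longrightarrow> length c = Suc (rk y - rk x)"
  unfolding max_chain_def using sat_chain_length by metis

lemma max_chain_same_ends:
  assumes "max_chain P le x x c"
  shows "c = [x]"
proof -
  have "length c = 1" using max_chain_length[OF assms] by simp
  then obtain a where "c = [a]" by (metis length_0_conv length_Suc_conv One_nat_def)
  then show ?thesis using assms unfolding max_chain_def by simp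
qed

lemma CP_iff: "c \<in> CPz \<longleftrightarrow> sat_chain P le c \<and> hd c = z"
  unfolding CP_def by simp

lemma finite_CP: "finite CPz"
proof (rule finite_subset[OF _ finite_lists_length_le[OF finite_P]])
  show "CPz \<subseteq> {xs. set xs \<subseteq> P \<and> length xs \<le> card P}"
  proof
    fix c assume "c \<in> CPz"
    then have c: "sat_chain P le c" "hd c = z" using CP_iff by auto
    then have "distinct c"
      unfolding distinct_conv_nth using zero_chain_rk_nth[OF c] by metis
    then have "length c \<le> card P"
      using card_mono[OF finite_P sat_chainD(2)[OF c(1)]] by (simp add: distinct_card)
    then show "c \<in> {xs. set xs \<subseteq> P \<and> length xs \<le> card P}" using sat_chainD(2)[OF c(1)] by simp
  qed
qed

lemma label_lt_trans: "a \<in> L \<Longrightarrow> b \<in> L \<Longrightarrow> c \<in> L \<Longrightarrow> lt lle a b \<Longrightarrow> lt lle b c \<Longrightarrow> lt lle a c"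
  using porder_lt_trans[OF porder_L] by blast

lemma word_nth: "i < length c - 1 \<Longrightarrow> word lam c ! i = lam (c ! i) (c ! Suc i)"
  unfolding word_def by simp

lemma word_nth_pred: "0 < i \<Longrightarrow> i < length c \<Longrightarrow> word lam c ! (i - 1) = lam (c ! (i - 1)) (c ! i)"
  using word_nth[of "i - 1" c] by simp

lemma length_word [simp]: "length (word lam c) = length c - 1"
  unfolding word_def by simp

lemma word_in_L: "sat_chain P le c \<Longrightarrow> set (word lam c) \<subseteq> L"
  using label_in_L sat_chainD(3) unfolding word_def by fastforce

lemma ascent_iff_word:
  "ascent lle lam c i \<longleftrightarrow> 0 < i \<and> Suc i < length c \<and> lt lle (word lam c ! (i - 1)) (word lam c ! i)"
  unfolding ascent_def using word_nth_pred[of i c] word_nth[of i c] by auto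

lemma increasing_iff_ascents:
  assumes c: "sat_chain P le c"
  shows "increasing lle lam c \<longleftrightarrow> (\<forall>i. 0 < i \<and> Suc i < length c \<longrightarrow> ascent lle lam c i)"
proof -
  have "increasing lle lam c \<longleftrightarrow> successively (lt lle) (word lam c)"
    unfolding increasing_def using word_in_L[OF c] label_lt_trans
    by (intro successively_iff_sorted_wrt_strong[symmetric]) blast
  also have "\<dots> \<longleftrightarrow> (\<forall>i. Suc i < length c - 1 \<longrightarrow> ascent lle lam c (Suc i))"
    unfolding successively_conv_nth ascent_iff_word by auto
  also have "\<dots> \<longleftrightarrow> (\<forall>i. 0 < i \<and> Suc i < length c \<longrightarrow> ascent lle lam c i)"
  proof (intro iffI allI impI)
    fix i assume "\<forall>i. Suc i < length c - 1 \<longrightarrow> ascent lle lam c (Suc i)" "0 < i \<and> Suc i < length c"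
    then show "ascent lle lam c i" by (metis Suc_pred' less_diff_conv add_Suc_right add_0_right One_nat_def)
  qed auto
  finally show ?thesis .
qed

abbreviation UU :: "nat \<Rightarrow> 'a list \<Rightarrow> 'a list" where "UU \<equiv> U P le lle lam"

lemma switch_unique:
  "sat_chain P le c \<Longrightarrow> hd c = z \<Longrightarrow> ascent lle lam c i \<Longrightarrow>
   \<exists>!v. swap_ok P le lam (c ! (i - 1)) (c ! i) (c ! Suc i) v"
  using rank_two_switching_lam unfolding rank_two_switching_def by blast

lemma U_eq_update:
  assumes "sat_chain P le c" "hd c = z" "ascent lle lam c i"
    "swap_ok P le lam (c ! (i - 1)) (c ! i) (c ! Suc i) v"
  shows "UU i c = c[i := v]"
  using the1_equality[OF switch_unique[OF assms(1-3)] assms(4)] assms(3) unfolding U_def by simp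

lemma U_obtain:
  assumes "sat_chain P le c" "hd c = z" "ascent lle lam c i"
  obtains v where "swap_ok P le lam (c ! (i - 1)) (c ! i) (c ! Suc i) v" "UU i c = c[i := v]"
  using switch_unique[OF assms] U_eq_update[OF assms] by blast

lemma swap_ok_sat_chain:
  assumes c: "sat_chain P le c" and a: "ascent lle lam c i"
    and s: "swap_ok P le lam (c ! (i - 1)) (c ! i) (c ! Suc i) v"
  shows "sat_chain P le (c[i := v])"
    and "word lam (c[i := v]) = (word lam c)[i - 1 := word lam c ! i, i := word lam c ! (i - 1)]"
proof -
  have i: "0 < i" "Suc i < length c" using a unfolding ascent_def by auto
  have v: "covers P le (c ! (i - 1)) v" "covers P le v (c ! Suc i)"
    "lam (c ! (i - 1)) v = lam (c ! i) (c ! Suc i)" "lam v (c ! Suc i) = lam (c ! (i - 1)) (c ! i)"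
    using s unfolding swap_ok_def by auto
  have pred: "Suc (i - 1) = i" using i by simp
  have "covers P le (c[i := v] ! m) (c[i := v] ! Suc m)" if m: "Suc m < length c" for m
  proof -
    consider "m = i - 1" | "m = i" | "Suc m \<noteq> i" "m \<noteq> i" using i by linarith
    then show ?thesis
      by cases (use v i pred sat_chainD(3)[OF c m] in \<open>simp_all add: nth_list_update\<close>)
  qed
  moreover have "v \<in> P" using v(1) unfolding covers_def by simp
  ultimately show "sat_chain P le (c[i := v])"
    using c set_update_subset_insert[of c i v] unfolding sat_chain_def by auto
  show "word lam (c[i := v]) = (word lam c)[i - 1 := word lam c ! i, i := word lam c ! (i - 1)]"
  proof (rule nth_equalityI)
    fix m assume "m < length (word lam (c[i := v]))"
    then have m: "m < length c - 1" by simp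
    consider "m = i - 1" | "m = i" | "Suc m \<noteq> i" "m \<noteq> i" using i by linarith
    then show "word lam (c[i := v]) ! m = (word lam c)[i - 1 := word lam c ! i, i := word lam c ! (i - 1)] ! m"
      by cases (use v i pred m word_nth[of m] word_nth[of i c] word_nth_pred[of i c] in
                \<open>simp_all add: nth_list_update\<close>)
  qed simp
qed

lemma U_props:
  assumes c: "sat_chain P le c" "hd c = z" and a: "ascent lle lam c i"
  shows "sat_chain P le (UU i c)" "hd (UU i c) = z" "last (UU i c) = last c"
    "length (UU i c) = length c"
    "word lam (UU i c) = (word lam c)[i - 1 := word lam c ! i, i := word lam c ! (i - 1)]"
    "\<And>m. m \<noteq> i \<Longrightarrow> UU i c ! m = c ! m"
proof -
  obtain v where v: "swap_ok P le lam (c ! (i - 1)) (c ! i) (c ! Suc i) v" "UU i c = c[i := v]"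
    using U_obtain[OF c a] by blast
  have i: "0 < i" "Suc i < length c" using a unfolding ascent_def by auto
  show "sat_chain P le (UU i c)"
    "word lam (UU i c) = (word lam c)[i - 1 := word lam c ! i, i := word lam c ! (i - 1)]"
    using swap_ok_sat_chain[OF c(1) a v(1)] v(2) by simp_all
  show "hd (UU i c) = z" "last (UU i c) = last c" "length (UU i c) = length c"
    "\<And>m. m \<noteq> i \<Longrightarrow> UU i c ! m = c ! m"
    using v(2) c(2) i sat_chainD(1)[OF c(1)] by (auto simp: hd_list_update_pos last_list_update)
qed

text \<open>Ascents only occur at positions \<open>i > 0\<close>, so \<open>exch_above 0\<close> is an arbitrary quadratic exchange.\<close>

definition exch_above :: "nat \<Rightarrow> 'a list \<Rightarrow> 'a list \<Rightarrow> bool" where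
  "exch_above j c d \<longleftrightarrow> sat_chain P le c \<and> hd c = z \<and> (\<exists>i. j < i \<and> ascent lle lam c i \<and> d = UU i c)"

definition ascent_free_above :: "nat \<Rightarrow> 'a list \<Rightarrow> bool" where
  "ascent_free_above j c \<longleftrightarrow> (\<forall>i. j < i \<longrightarrow> \<not> ascent lle lam c i)"

abbreviation ascent_free :: "'a list \<Rightarrow> bool" where
  "ascent_free \<equiv> ascent_free_above 0"

lemma ascent_free_iff: "ascent_free c \<longleftrightarrow> (\<forall>i. \<not> ascent lle lam c i)"
  unfolding ascent_free_above_def ascent_def by auto

lemma exch_aboveI:
  "sat_chain P le c \<Longrightarrow> hd c = z \<Longrightarrow> j < i \<Longrightarrow> ascent lle lam c i \<Longrightarrow> exch_above j c (UU i c)"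
  unfolding exch_above_def by blast

lemma exch_above_props:
  assumes "exch_above j c d"
  shows "sat_chain P le d" "hd d = z" "last d = last c" "length d = length c"
    "take (Suc j) d = take (Suc j) c"
proof -
  obtain i where i: "sat_chain P le c" "hd c = z" "j < i" "ascent lle lam c i" "d = UU i c"
    using assms unfolding exch_above_def by blast
  show "sat_chain P le d" "hd d = z" "last d = last c" "length d = length c"
    using U_props[OF i(1,2,4)] i(5) by auto
  show "take (Suc j) d = take (Suc j) c"
    using U_props(4,6)[OF i(1,2,4)] i(3,5) by (intro nth_equalityI) auto
qed

lemma exch_above_mono: "exch_above j c d \<Longrightarrow> exch_above 0 c d"
  unfolding exch_above_def by (metis ascent_def)

lemma exch_above_no_ascent_free: "ascent_free_above j c \<Longrightarrow> \<not> exch_above j c d"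
  unfolding ascent_free_above_def exch_above_def by blast

text \<open>An exchange swaps an adjacent ascending pair of labels, so it strictly decreases the
  number of ascending pairs of the word.\<close>

lemma wf_exch_above: "wf {(d, c). exch_above j c d}"
proof (rule wf_subset[OF wf_measure[of "\<lambda>c. card (ascending_pairs lle (word lam c))"]], clarify)
  fix c d assume "exch_above j c d"
  then obtain i where i: "sat_chain P le c" "hd c = z" "ascent lle lam c i" "d = UU i c"
    unfolding exch_above_def by blast
  have a: "0 < i" "Suc (i - 1) < length (word lam c)" "lt lle (word lam c ! (i - 1)) (word lam c ! Suc (i - 1))"
    using i(3) ascent_iff_word by auto
  show "(d, c) \<in> measure (\<lambda>c. card (ascending_pairs lle (word lam c)))"
    using card_ascending_pairs_swap_less[OF porder_L word_in_L[OF i(1)] a(2,3)] U_props(5)[OF i(1-3)] i(4) a(1)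
    by simp
qed

lemma ascent_free_above_exists:
  "sat_chain P le c \<Longrightarrow> hd c = z \<Longrightarrow> \<exists>d. (exch_above j)\<^sup>*\<^sup>* c d \<and> ascent_free_above j d"
proof (induction c rule: wf_induct[OF wf_exch_above[of j]])
  case (1 c)
  show ?case
  proof (cases "ascent_free_above j c")
    case False
    then obtain i where "j < i" "ascent lle lam c i" unfolding ascent_free_above_def by blast
    then have step: "exch_above j c (UU i c)" using exch_aboveI "1.prems" by blast
    then obtain d where "(exch_above j)\<^sup>*\<^sup>* (UU i c) d" "ascent_free_above j d"
      using "1.IH" exch_above_props[OF step] by blast
    then show ?thesis using step by (meson converse_rtranclp_into_rtranclp)
  qed blast
qed

lemma exchanges_commute:
  assumes c: "sat_chain P le c" "hd c = z" and ai: "ascent lle lam c i" and ak: "ascent lle lam c k"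
    and ik: "Suc i < k"
  shows "ascent lle lam (UU i c) k" "ascent lle lam (UU k c) i" "UU k (UU i c) = UU i (UU k c)"
proof -
  obtain v where v: "swap_ok P le lam (c ! (i - 1)) (c ! i) (c ! Suc i) v" "UU i c = c[i := v]"
    using U_obtain[OF c ai] by blast
  obtain w where w: "swap_ok P le lam (c ! (k - 1)) (c ! k) (c ! Suc k) w" "UU k c = c[k := w]"
    using U_obtain[OF c ak] by blast
  have ne: "k - 1 \<noteq> i" "k \<noteq> i" "Suc k \<noteq> i" "i - 1 \<noteq> k" "Suc i \<noteq> k"
    using ik ai unfolding ascent_def by auto
  show ai': "ascent lle lam (UU i c) k" and ak': "ascent lle lam (UU k c) i"
    using ai ak ne v(2) w(2) unfolding ascent_def by (simp_all add: nth_list_update)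
  have "UU k (UU i c) = c[i := v, k := w]"
    using U_eq_update[OF U_props(1,2)[OF c ai] ai'] w(1) v(2) ne by (simp add: nth_list_update)
  moreover have "UU i (UU k c) = c[k := w, i := v]"
    using U_eq_update[OF U_props(1,2)[OF c ak] ak'] v(1) w(2) ne by (simp add: nth_list_update)
  ultimately show "UU k (UU i c) = UU i (UU k c)" using ne by (simp add: list_update_swap)
qed

text \<open>At three consecutive increasing labels \<open>a < b < d\<close>, both sides of the braid relation are
  sequences of genuine exchanges.\<close>

lemma braid_ascents:
  assumes c: "sat_chain P le c" "hd c = z"
    and ai: "ascent lle lam c i" and ai1: "ascent lle lam c (Suc i)"
  shows "ascent lle lam (UU i c) (Suc i)" "ascent lle lam (UU (Suc i) (UU i c)) i"
    "ascent lle lam (UU (Suc i) c) i" "ascent lle lam (UU i (UU (Suc i) c)) (Suc i)"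
proof -
  define W where "W = word lam c"
  have i: "0 < i" "Suc (Suc i) < length c" using ai ai1 unfolding ascent_def by auto
  have pos: "i - 1 < length W" "i < length W" "Suc i < length W" using i W_def by auto
  have labels: "W ! (i - 1) \<in> L" "W ! i \<in> L" "W ! Suc i \<in> L"
    using nth_mem[OF pos(1)] nth_mem[OF pos(2)] nth_mem[OF pos(3)] word_in_L[OF c(1)] W_def by auto
  have ab: "lt lle (W ! (i - 1)) (W ! i)" and bd: "lt lle (W ! i) (W ! Suc i)"
    using ai ai1 ascent_iff_word W_def by auto
  have ad: "lt lle (W ! (i - 1)) (W ! Suc i)" using label_lt_trans[OF labels ab bd] .
  have neq: "i - 1 \<noteq> i" "i - 1 \<noteq> Suc i" using i by auto
  show a1: "ascent lle lam (UU i c) (Suc i)"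
    unfolding ascent_iff_word using U_props(4,5)[OF c ai] i ad neq W_def by (simp add: nth_list_update)
  show "ascent lle lam (UU (Suc i) (UU i c)) i"
    unfolding ascent_iff_word using U_props(4,5)[OF U_props(1,2)[OF c ai] a1] U_props(4,5)[OF c ai] i bd neq W_def
    by (simp add: nth_list_update)
  show a3: "ascent lle lam (UU (Suc i) c) i"
    unfolding ascent_iff_word using U_props(4,5)[OF c ai1] i ad neq W_def by (simp add: nth_list_update)
  show "ascent lle lam (UU i (UU (Suc i) c)) (Suc i)"
    unfolding ascent_iff_word using U_props(4,5)[OF U_props(1,2)[OF c ai1] a3] U_props(4,5)[OF c ai1] i ab neq W_def
    by (simp add: nth_list_update)
qed

lemma braid_join:
  assumes c: "sat_chain P le c" "hd c = z" and ai: "ascent lle lam c i"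
    and ai1: "ascent lle lam c (Suc i)" and ji: "j < i"
  shows "\<exists>e. (exch_above j)\<^sup>*\<^sup>* (UU i c) e \<and> (exch_above j)\<^sup>*\<^sup>* (UU (Suc i) c) e"
proof -
  note asc = braid_ascents[OF c ai ai1]
  note c1 = U_props(1,2)[OF c ai] and c3 = U_props(1,2)[OF c ai1]
  have "UU i (UU (i + 1) (UU i c)) = UU (i + 1) (UU i (UU (i + 1) c))"
    using braid_relation_lam c ai ai1 unfolding braid_relation_def ascent_def by (simp add: numeral_2_eq_2)
  moreover have "exch_above j (UU i c) (UU (Suc i) (UU i c))"
    "exch_above j (UU (Suc i) (UU i c)) (UU i (UU (Suc i) (UU i c)))"
    "exch_above j (UU (Suc i) c) (UU i (UU (Suc i) c))"
    "exch_above j (UU i (UU (Suc i) c)) (UU (Suc i) (UU i (UU (Suc i) c)))"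
    using exch_aboveI[OF c1 _ asc(1)] exch_aboveI[OF U_props(1,2)[OF c1 asc(1)] _ asc(2)]
      exch_aboveI[OF c3 _ asc(3)] exch_aboveI[OF U_props(1,2)[OF c3 asc(3)] _ asc(4)] ji
    by simp_all
  ultimately show ?thesis by (metis Suc_eq_plus1 converse_rtranclp_into_rtranclp r_into_rtranclp)
qed

lemma exch_above_local_confluence:
  assumes "exch_above j c d1" "exch_above j c d2"
  shows "\<exists>e. (exch_above j)\<^sup>*\<^sup>* d1 e \<and> (exch_above j)\<^sup>*\<^sup>* d2 e"
proof -
  have main: "\<exists>e. (exch_above j)\<^sup>*\<^sup>* (UU i c) e \<and> (exch_above j)\<^sup>*\<^sup>* (UU k c) e"
    if c: "sat_chain P le c" "hd c = z" and ai: "ascent lle lam c i" and ak: "ascent lle lam c k"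
      and ik: "i < k" and ji: "j < i" for c i k
  proof (cases "k = Suc i")
    case True then show ?thesis using braid_join[OF c ai _ ji] ak by simp
  next
    case False
    then have "Suc i < k" using ik by simp
    note comm = exchanges_commute[OF c ai ak this]
    have "exch_above j (UU i c) (UU k (UU i c))" "exch_above j (UU k c) (UU i (UU k c))"
      using exch_aboveI[OF U_props(1,2)[OF c ai] _ comm(1), of j]
        exch_aboveI[OF U_props(1,2)[OF c ak] _ comm(2), of j] ji ik by simp_all
    then show ?thesis using comm(3) by (metis r_into_rtranclp)
  qed
  obtain i k where c: "sat_chain P le c" "hd c = z" and i: "j < i" "ascent lle lam c i" "d1 = UU i c"
    and k: "j < k" "ascent lle lam c k" "d2 = UU k c"
    using assms unfolding exch_above_def by blast
  consider "i = k" | "i < k" | "k < i" by linarith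
  then show ?thesis
    by cases (use i k main[OF c i(2) k(2)] main[OF c k(2) i(2)] in blast)+
qed

lemma confluentp_exch_above: "confluentp (exch_above j)"
  using newman[OF wf_exch_above exch_above_local_confluence] .

lemma ascent_free_above_unique:
  "equivclp (exch_above j) a b \<Longrightarrow> ascent_free_above j a \<Longrightarrow> ascent_free_above j b \<Longrightarrow> a = b"
  using equivclp_normal_forms_eq[OF confluentp_exch_above] exch_above_no_ascent_free by metis

lemma exch_above_CP: "exch_above j c d \<Longrightarrow> c \<in> CPz \<and> d \<in> CPz \<and> last d = last c"
  using exch_above_props[of j c d] unfolding exch_above_def CP_iff by auto

lemma equivclp_exch_above_props:
  assumes "equivclp (exch_above j) c d" "c \<in> CPz"
  shows "d \<in> CPz" "last d = last c" "length d = length c" "take (Suc j) d = take (Suc j) c"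
  using assms by (induction rule: equivclp_induct) (auto dest: exch_above_props exch_above_CP)

lemma equivclp_exch_above_mono: "equivclp (exch_above j) c d \<Longrightarrow> equivclp (exch_above 0) c d"
  by (induction rule: equivclp_induct) (auto intro: equivclp_into_equivclp exch_above_mono)

lemma xstep_iff_exch_above:
  assumes "c \<in> CPz"
  shows "xstep P le lle lam c d \<longleftrightarrow> exch_above 0 c d"
proof
  assume "xstep P le lle lam c d"
  then obtain i v where "ascent lle lam c i" "swap_ok P le lam (c ! (i - 1)) (c ! i) (c ! Suc i) v" "d = c[i := v]"
    unfolding xstep_def by blast
  then show "exch_above 0 c d"
    using assms U_eq_update exch_aboveI[of c 0 i] unfolding CP_iff ascent_def by metis
next
  assume "exch_above 0 c d"
  then obtain i where "sat_chain P le c" "hd c = z" "ascent lle lam c i" "d = UU i c"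
    unfolding exch_above_def by blast
  then show "xstep P le lle lam c d" unfolding xstep_def by (metis U_obtain)
qed

lemma lam_equiv_iff_equivclp:
  assumes "max_chain P le z y c"
  shows "lam_equiv P le lle lam z y c d \<longleftrightarrow> equivclp (exch_above 0) c d"
proof
  have CP: "max_chain P le z y e \<Longrightarrow> e \<in> CPz" for e unfolding max_chain_def CP_iff by simp
  assume "lam_equiv P le lle lam z y c d"
  then have "(\<lambda>c1 c2. max_chain P le z y c1 \<and> max_chain P le z y c2 \<and>
      (xstep P le lle lam c1 c2 \<or> xstep P le lle lam c2 c1))\<^sup>*\<^sup>* c d"
    unfolding lam_equiv_def by simp
  then show "equivclp (exch_above 0) c d"
  proof (induction rule: rtranclp_induct)
    case (step e f)
    then have "exch_above 0 e f \<or> exch_above 0 f e"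
      using xstep_iff_exch_above[OF CP] by blast
    then show ?case using step(3) by (blast intro: equivclp_into_equivclp)
  qed simp
next
  have max_chain: "max_chain P le z y e" if "equivclp (exch_above 0) c e" for e
    using equivclp_exch_above_props(1,2)[OF that] assms unfolding max_chain_def CP_iff by simp
  assume "equivclp (exch_above 0) c d"
  then have "(\<lambda>c1 c2. max_chain P le z y c1 \<and> max_chain P le z y c2 \<and>
      (xstep P le lle lam c1 c2 \<or> xstep P le lle lam c2 c1))\<^sup>*\<^sup>* c d"
  proof (induction rule: equivclp_induct)
    case (step e f)
    have e: "e \<in> CPz" "max_chain P le z y e" using max_chain[OF step(1)] exch_above_CP step(2) by auto
    have f: "f \<in> CPz" "max_chain P le z y f"
      using max_chain[OF equivclp_into_equivclp[OF step(1,2)]] exch_above_CP step(2) by auto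
    have "xstep P le lle lam e f \<or> xstep P le lle lam f e"
      using step(2) xstep_iff_exch_above[OF e(1)] xstep_iff_exch_above[OF f(1)] by blast
    then show ?case using step(3) e(2) f(2) by (blast intro: rtranclp.rtrancl_into_rtrancl)
  qed simp
  then show "lam_equiv P le lle lam z y c d"
    unfolding lam_equiv_def using assms max_chain[OF \<open>equivclp (exch_above 0) c d\<close>] by simp
qed

lemma Qrel_iff: "(c, d) \<in> Qrel P le z lle lam \<longleftrightarrow> c \<in> CPz \<and> equivclp (exch_above 0) c d"
proof -
  have "lam_equiv P le lle lam z (last c) c d \<longleftrightarrow> equivclp (exch_above 0) c d" if "c \<in> CPz"
    using that lam_equiv_iff_equivclp unfolding CP_iff max_chain_def by simp
  then show ?thesis
    unfolding Qrel_def using equivclp_exch_above_props(1,2) by auto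
qed

lemma equiv_Qrel: "equiv CPz (Qrel P le z lle lam)"
proof (rule equivI)
  show "refl_on CPz (Qrel P le z lle lam)"
    by (rule refl_onI) (simp add: Qrel_iff)
  show "sym (Qrel P le z lle lam)"
    by (rule symI) (auto simp: Qrel_iff dest: equivclp_exch_above_props(1) equivclp_sym)
  show "trans (Qrel P le z lle lam)"
    by (rule transI) (auto simp: Qrel_iff intro: equivclp_trans)
  show "Qrel P le z lle lam \<subseteq> CPz \<times> CPz"
    unfolding Qrel_def by auto
qed

lemma exch_above_append:
  assumes step: "exch_above j b b'" and br: "sat_chain P le (b @ r)"
  shows "exch_above j (b @ r) (b' @ r)"
proof -
  obtain i where i: "sat_chain P le b" "hd b = z" "j < i" "ascent lle lam b i" "b' = UU i b"
    using step unfolding exch_above_def by blast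
  obtain v where v: "swap_ok P le lam (b ! (i - 1)) (b ! i) (b ! Suc i) v" "UU i b = b[i := v]"
    using U_obtain[OF i(1,2,4)] by blast
  have len: "0 < i" "Suc i < length b" "i - 1 < length b" using i(4) unfolding ascent_def by auto
  have hd: "hd (b @ r) = z" using sat_chainD(1)[OF i(1)] i(2) by simp
  have a: "ascent lle lam (b @ r) i" using i(4) len unfolding ascent_def by (simp add: nth_append)
  have "UU i (b @ r) = (b @ r)[i := v]"
    using U_eq_update[OF br hd a] v(1) len by (simp add: nth_append)
  also have "\<dots> = b' @ r" using i(5) v(2) len by (simp add: list_update_append)
  finally show ?thesis using exch_aboveI[OF br hd i(3) a] by simp
qed

lemma equivclp_exch_above_append:
  assumes "equivclp (exch_above j) c c'" "c \<in> CPz"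
    and r: "sat_chain P le r" "hd r = last c"
  shows "equivclp (exch_above j) (c @ tl r) (c' @ tl r)"
proof -
  have join: "sat_chain P le (e @ tl r)" if "e \<in> CPz" "last e = last c" for e
    using sat_chain_join[of P le e r] that r unfolding CP_iff by auto
  show ?thesis
    using assms(1)
  proof (induction rule: equivclp_induct)
    case (step e f)
    have "e \<in> CPz" "last e = last c" using equivclp_exch_above_props[OF step(1) assms(2)] by auto
    moreover have "f \<in> CPz" "last f = last c" using step(2) calculation exch_above_CP by auto
    ultimately show ?case using step exch_above_append join equivclp_into_equivclp by metis
  qed simp
qed

lemma exch_above_prepend:
  assumes p: "sat_chain P le p" "hd p = z" "length p = Suc j"
    and s: "max_chain P le (last p) y s" and step: "xstep P le lle lam s s'"
  shows "exch_above j (p @ tl s) (p @ tl s')"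
proof -
  obtain i v where i: "ascent lle lam s i" "swap_ok P le lam (s ! (i - 1)) (s ! i) (s ! Suc i) v"
      "s' = s[i := v]"
    using step unfolding xstep_def by blast
  obtain m where m: "i = Suc m" using i(1) unfolding ascent_def by (cases i) auto
  have len: "Suc i < length s" using i(1) unfolding ascent_def by auto
  have s_chain: "sat_chain P le s" "hd s = last p" using s unfolding max_chain_def by auto
  have ne: "p \<noteq> []" using p(1) sat_chainD by auto
  define C where "C = p @ tl s"
  have C: "sat_chain P le C" "hd C = z"
    unfolding C_def using sat_chain_join[OF p(1) s_chain(1)] s_chain(2) ne p(2) by auto
  have C_nth: "k < length s \<Longrightarrow> C ! (j + k) = s ! k" for k
    using nth_append_tl[OF ne s_chain(2)[symmetric]] p(3) unfolding C_def by simp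
  have shift: "C ! (j + i - 1) = s ! (i - 1)" "C ! (j + i) = s ! i" "C ! Suc (j + i) = s ! Suc i"
    using C_nth[of "i - 1"] C_nth[of i] C_nth[of "Suc i"] len m by simp_all
  have a: "ascent lle lam C (j + i)"
    using i(1) shift len p(3) unfolding ascent_def C_def by simp
  have "UU (j + i) C = C[j + i := v]" using U_eq_update[OF C a] i(2) shift by simp
  also have "\<dots> = p @ (tl s)[m := v]" unfolding C_def using p(3) m by (simp add: list_update_append)
  also have "\<dots> = p @ tl s'" using i(3) m by (cases s) auto
  finally show ?thesis using exch_aboveI[OF C _ a, of j] m unfolding C_def by simp
qed

lemma equivclp_exch_above_prepend:
  assumes p: "sat_chain P le p" "hd p = z" "length p = Suc j"
    and eq: "lam_equiv P le lle lam (last p) y s s'"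
  shows "equivclp (exch_above j) (p @ tl s) (p @ tl s')"
proof -
  have "(\<lambda>c1 c2. max_chain P le (last p) y c1 \<and> max_chain P le (last p) y c2 \<and>
        (xstep P le lle lam c1 c2 \<or> xstep P le lle lam c2 c1))\<^sup>*\<^sup>* s s'"
    using eq unfolding lam_equiv_def by simp
  then show ?thesis
    by (induction rule: rtranclp_induct)
      (auto intro: equivclp_into_equivclp dest: exch_above_prepend[OF p])
qed

text \<open>This is where the cancellative property enters.\<close>

lemma equivclp_exch_above_cancel:
  assumes c: "c \<in> CPz" and eq: "equivclp (exch_above 0) c c'"
    and j: "j < length c" and common: "take (Suc j) c = take (Suc j) c'"
  shows "equivclp (exch_above j) c c'"
proof -
  have c': "c' \<in> CPz" "last c' = last c" "length c' = length c"
    using equivclp_exch_above_props[OF eq c] by auto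
  have cs: "sat_chain P le c" "hd c = z" "c \<noteq> []" using c sat_chainD(1) unfolding CP_iff by auto
  show ?thesis
  proof (cases "0 < j \<and> j < length c - 1")
    case False
    then consider "j = 0" | "Suc j = length c" using j by linarith
    then show ?thesis
      by cases (use eq common c'(3) in simp_all)
  next
    case True
    define p where "p = take (Suc j) c"
    define t where "t = c ! j"
    define y where "y = last c"
    have split: "c = p @ tl (drop j c)" "c' = p @ tl (drop j c')"
      using take_Suc_append_tl_drop[of j c] take_Suc_append_tl_drop[of j c'] j c'(3) common
      unfolding p_def by simp_all
    have p: "max_chain P le z t p" "length p = Suc j"
      using sat_chain_take_max_chain[OF cs(1) j] cs(2) j unfolding p_def t_def by simp_all
    have "c' ! j = t" using common last_take_Suc[of j c] last_take_Suc[of j c'] j c'(3) t_def by simp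
    then have drops: "max_chain P le t y (drop j c)" "max_chain P le t y (drop j c')"
      using sat_chain_drop_max_chain[OF cs(1) j] sat_chain_drop_max_chain[of P le c' j] c' j
      unfolding CP_iff t_def y_def by auto
    have "c ! 0 = z" "c ! (length c - 1) = y"
      using cs(2) hd_conv_nth[OF cs(3)] last_conv_nth[OF cs(3)] y_def by simp_all
    then have "lt le z t" "lt le t y"
      using sat_chain_lt[OF porder_P cs(1), of 0 j] sat_chain_lt[OF porder_P cs(1), of j "length c - 1"]
        True j cs(3) unfolding t_def by simp_all
    moreover have "lam_equiv P le lle lam z y (p @ tl (drop j c)) (p @ tl (drop j c'))"
      using lam_equiv_iff_equivclp[of y c c'] eq split cs unfolding max_chain_def y_def by simp
    ultimately have "lam_equiv P le lle lam t y (drop j c) (drop j c')"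
      using cancellative_lam[unfolded cancellative_def, rule_format, of z t y p "drop j c" "drop j c'"]
        z_in_P max_chain_interval(1,2)[OF drops(1)] drops p(1) by simp
    then have "equivclp (exch_above j) (p @ tl (drop j c)) (p @ tl (drop j c'))"
      using equivclp_exch_above_prepend[of p j] p unfolding max_chain_def by simp
    then show ?thesis using split by simp
  qed
qed

subsection \<open>The poset \<open>Q\<^sub>\<lambda>(P)\<close>\<close>

abbreviation "Qc \<equiv> Qcarrier P le z lle lam"
abbreviation "QL \<equiv> Qle P le z lle lam"

definition Qclass :: "'a list \<Rightarrow> 'a list set" where
  "Qclass c = Qrel P le z lle lam `` {c}"

lemma Qclass_iff: "d \<in> Qclass c \<longleftrightarrow> c \<in> CPz \<and> equivclp (exch_above 0) c d"
  unfolding Qclass_def using Qrel_iff by auto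

lemma Qclass_self: "c \<in> CPz \<Longrightarrow> c \<in> Qclass c"
  using Qclass_iff by simp

lemma Qclass_in_Qc: "c \<in> CPz \<Longrightarrow> Qclass c \<in> Qc"
  unfolding Qclass_def Qcarrier_def by (rule quotientI)

lemma QcE:
  assumes "X \<in> Qc" "d \<in> X"
  shows "d \<in> CPz" "X = Qclass d"
proof -
  obtain c where c: "X = Qclass c"
    using assms(1) unfolding Qclass_def Qcarrier_def by (auto elim: quotientE)
  then have "(c, d) \<in> Qrel P le z lle lam" using assms(2) unfolding Qclass_def by simp
  then show "d \<in> CPz" "X = Qclass d"
    using c equiv_class_eq[OF equiv_Qrel] unfolding Qclass_def Qrel_def by auto
qed

lemma Qc_nonempty: "X \<in> Qc \<Longrightarrow> \<exists>c. c \<in> X"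
  using Qclass_self unfolding Qclass_def Qcarrier_def by (auto elim!: quotientE)

lemma Qc_same_class:
  assumes "X \<in> Qc" "c \<in> X" "d \<in> X"
  shows "equivclp (exch_above 0) c d" "last d = last c" "length d = length c"
proof -
  show "equivclp (exch_above 0) c d" using QcE[OF assms(1,2)] assms(3) Qclass_iff by auto
  then show "last d = last c" "length d = length c"
    using equivclp_exch_above_props QcE(1)[OF assms(1,2)] by auto
qed

text \<open>The choice is irrelevant: all chains of a class end in the same element of \<open>P\<close>.\<close>

definition Qtop :: "'a list set \<Rightarrow> 'a" where
  "Qtop X = last (SOME c. c \<in> X)"

definition Qrank :: "'a list set \<Rightarrow> nat" where
  "Qrank X = rk (Qtop X)"

lemma Qtop:
  assumes "X \<in> Qc" "c \<in> X"
  shows "last c = Qtop X" "length c = Suc (Qrank X)"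
proof -
  have some: "(SOME c. c \<in> X) \<in> X" using assms(2) by (rule someI)
  show top: "last c = Qtop X" unfolding Qtop_def using Qc_same_class(2)[OF assms(1) some assms(2)] by simp
  show "length c = Suc (Qrank X)"
    using QcE(1)[OF assms] zero_chain_length top unfolding Qrank_def CP_iff by auto
qed

lemma Qtop_in_P:
  assumes X: "X \<in> Qc"
  shows "Qtop X \<in> P"
proof -
  obtain c where c: "c \<in> X" using Qc_nonempty[OF X] by blast
  have "last c \<in> P" using QcE(1)[OF X c] sat_chain_last_mem unfolding CP_iff by blast
  then show ?thesis using Qtop(1)[OF X c] by simp
qed

text \<open>The \<open>i\<close>-th element of a chain from \<open>z\<close> is the element of the chain of rank \<open>i\<close>.\<close>

lemma take_length_if_subset:
  assumes c: "c \<in> CPz" and d: "d \<in> CPz" and sub: "set c \<subseteq> set d"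
  shows "take (length c) d = c"
proof -
  have cs: "sat_chain P le c" "hd c = z" and ds: "sat_chain P le d" "hd d = z" using c d CP_iff by auto
  have same: "i < length d \<and> d ! i = c ! i" if i: "i < length c" for i
  proof -
    have "c ! i \<in> set d" using sub i by auto
    then obtain k where k: "k < length d" "d ! k = c ! i" by (auto simp: in_set_conv_nth)
    then have "k = i" using zero_chain_rk_nth[OF ds k(1)] zero_chain_rk_nth[OF cs i] by simp
    then show ?thesis using k by simp
  qed
  have "length c \<le> length d" using same[of "length c - 1"] sat_chainD(1)[OF cs(1)] by (cases c) auto
  then show ?thesis using same by (intro nth_equalityI) auto
qed

definition Qprefix :: "'a list set \<Rightarrow> 'a list set \<Rightarrow> bool" where
  "Qprefix X Y \<longleftrightarrow> X \<in> Qc \<and> Y \<in> Qc \<and> (\<exists>c\<in>X. \<exists>d\<in>Y. take (length c) d = c)"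

lemma Qprefix_iff_subset:
  "Qprefix X Y \<longleftrightarrow> X \<in> Qc \<and> Y \<in> Qc \<and> (\<exists>c\<in>X. \<exists>d\<in>Y. set c \<subseteq> set d)"
proof
  assume "Qprefix X Y"
  then obtain c d where "X \<in> Qc" "Y \<in> Qc" "c \<in> X" "d \<in> Y" "take (length c) d = c"
    unfolding Qprefix_def by blast
  then show "X \<in> Qc \<and> Y \<in> Qc \<and> (\<exists>c\<in>X. \<exists>d\<in>Y. set c \<subseteq> set d)"
    using set_take_subset[of "length c" d] by auto
next
  assume "X \<in> Qc \<and> Y \<in> Qc \<and> (\<exists>c\<in>X. \<exists>d\<in>Y. set c \<subseteq> set d)"
  then show "Qprefix X Y" unfolding Qprefix_def using QcE(1) take_length_if_subset by blast
qed

text \<open>The exchanges turning one representative of \<open>X\<close> into another can be performed inside a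
  longer chain.\<close>

lemma Qprefix_representative:
  assumes "Qprefix X Y" "q \<in> X"
  obtains d where "d \<in> Y" "take (length q) d = q"
proof -
  obtain c e where ce: "X \<in> Qc" "Y \<in> Qc" "c \<in> X" "e \<in> Y" "take (length c) e = c"
    using assms(1) unfolding Qprefix_def by blast
  have cq: "equivclp (exch_above 0) c q" using Qc_same_class[OF ce(1,3) assms(2)] by simp
  have c: "c \<in> CPz" "e \<in> CPz" using QcE(1) ce by auto
  have ne: "c \<noteq> []" using c(1) sat_chainD(1) unfolding CP_iff by blast
  then have j: "length c - 1 < length e" using length_le_if_take_eq[OF ce(5)] by (cases c) auto
  define r where "r = drop (length c - 1) e"
  have "take (Suc (length c - 1)) e = c" using ce(5) ne by (cases c) auto
  then have r: "sat_chain P le r" "hd r = last c" "e = c @ tl r"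
    using sat_chain_drop[of P le e, OF _ j] c(2) hd_drop_conv_nth[OF j] last_take_Suc[OF j]
      take_Suc_append_tl_drop[OF j] unfolding r_def CP_iff by auto
  have "equivclp (exch_above 0) e (q @ tl r)"
    using equivclp_exch_above_append[OF cq c(1) r(1,2)] r(3) by simp
  then have "q @ tl r \<in> Y" using QcE(2)[OF ce(2,4)] Qclass_iff c(2) by auto
  then show thesis using that by simp
qed

lemma Qprefix_trans:
  assumes "Qprefix X Y" "Qprefix Y W"
  shows "Qprefix X W"
proof -
  obtain c d where cd: "c \<in> X" "d \<in> Y" "take (length c) d = c" using assms(1) unfolding Qprefix_def by blast
  obtain e where e: "e \<in> W" "take (length d) e = d" using Qprefix_representative[OF assms(2) cd(2)] .
  have "take (length c) e = c"
    using cd(3) e(2) length_le_if_take_eq[OF cd(3)] by (metis min.absorb1 take_take)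
  then show ?thesis using assms e(1) cd(1) unfolding Qprefix_def by blast
qed

lemma Qle_iff_Qprefix: "QL X Y \<longleftrightarrow> Qprefix X Y"
proof
  assume "QL X Y"
  then have "(\<lambda>X Y. Qprefix X Y)\<^sup>+\<^sup>+ X Y" unfolding Qle_def Qprefix_iff_subset[abs_def] by simp
  then show "Qprefix X Y" by (induction rule: tranclp_induct) (auto intro: Qprefix_trans)
next
  assume "Qprefix X Y"
  then show "QL X Y" unfolding Qle_def Qprefix_iff_subset by auto
qed

lemma Qle_iff: "QL X Y \<longleftrightarrow> X \<in> Qc \<and> Y \<in> Qc \<and> (\<exists>c\<in>X. \<exists>d\<in>Y. take (length c) d = c)"
  using Qle_iff_Qprefix Qprefix_def by simp

lemma Qle_Qrank:
  assumes "QL X Y"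
  shows "Qrank X \<le> Qrank Y" "Qrank X = Qrank Y \<Longrightarrow> X = Y"
proof -
  obtain c d where cd: "X \<in> Qc" "Y \<in> Qc" "c \<in> X" "d \<in> Y" "take (length c) d = c"
    using assms Qle_iff by blast
  have "length c \<le> length d" using length_le_if_take_eq[OF cd(5)] .
  then show "Qrank X \<le> Qrank Y" using Qtop(2)[OF cd(1,3)] Qtop(2)[OF cd(2,4)] by simp
  assume "Qrank X = Qrank Y"
  then have "c = d" using cd(5) Qtop(2)[OF cd(1,3)] Qtop(2)[OF cd(2,4)] by simp
  then show "X = Y" using QcE(2)[OF cd(1,3)] QcE(2)[OF cd(2,4)] by simp
qed

lemma Qclass_zero: "Qclass [z] = {[z]}"
proof -
  have zc: "[z] \<in> CPz" unfolding CP_iff using sat_chain_singleton[OF z_in_P] by simp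
  have "d = [z]" if "d \<in> Qclass [z]" for d
  proof -
    have "d \<in> CPz" "last d = z" "length d = 1"
      using equivclp_exch_above_props[of 0 "[z]" d] zc that Qclass_iff by auto
    then show ?thesis by (cases d) auto
  qed
  then show ?thesis using Qclass_self[OF zc] by blast
qed

lemma zero_in_Qc: "{[z]} \<in> Qc"
  using Qclass_in_Qc[of "[z]"] Qclass_zero sat_chain_singleton[OF z_in_P] unfolding CP_iff by fastforce

lemma Qrank_zero: "Qrank {[z]} = 0"
  using Qtop(2)[OF zero_in_Qc, of "[z]"] by simp

lemma Qle_zero: "X \<in> Qc \<Longrightarrow> QL {[z]} X"
proof -
  assume X: "X \<in> Qc"
  obtain c where c: "c \<in> X" using Qc_nonempty[OF X] by blast
  then have "take 1 c = [z]" using QcE(1)[OF X c] unfolding CP_iff by (cases c) (auto dest: sat_chainD)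
  then show ?thesis using Qle_iff X zero_in_Qc c by force
qed

lemma finite_Qc: "finite Qc"
proof (rule finite_subset[OF _ finite_imageI[OF finite_CP]])
  show "Qc \<subseteq> Qclass ` CPz" using Qc_nonempty QcE by blast
qed

lemma porder_Qc: "porder Qc QL"
  unfolding porder_def
proof (intro conjI ballI impI)
  fix X assume X: "X \<in> Qc"
  then obtain c where "c \<in> X" using Qc_nonempty by blast
  then show "QL X X" using Qle_iff X by force
next
  fix X Y assume "X \<in> Qc" "Y \<in> Qc" "QL X Y \<and> QL Y X"
  then show "X = Y" using Qle_Qrank by (meson le_antisym)
next
  fix X Y W assume "X \<in> Qc" "Y \<in> Qc" "W \<in> Qc" "QL X Y \<and> QL Y W"
  then show "QL X W" using Qle_iff_Qprefix Qprefix_trans by blast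
qed

text \<open>A class strictly between \<open>X \<lessdot> Y\<close> would be given by an initial segment of a chain of \<open>Y\<close>.\<close>

lemma Qrank_covers:
  assumes cv: "covers Qc QL X Y"
  shows "Qrank Y = Suc (Qrank X)"
proof (rule ccontr)
  assume not_suc: "Qrank Y \<noteq> Suc (Qrank X)"
  have XY: "X \<in> Qc" "Y \<in> Qc" "QL X Y" "X \<noteq> Y" using cv unfolding covers_def lt_def by auto
  have "Qrank X < Qrank Y" using Qle_Qrank[OF XY(3)] XY(4) by fastforce
  obtain c d where cd: "c \<in> X" "d \<in> Y" "take (length c) d = c" using XY Qle_iff by blast
  have long: "Suc (length c) < length d" using not_suc \<open>Qrank X < Qrank Y\<close> Qtop XY cd by simp
  define w where "w = take (Suc (length c)) d"
  have "w \<in> CPz"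
    using sat_chain_take[of P le d "length c"] QcE(1)[OF XY(2) cd(2)] long
    unfolding w_def CP_iff by (cases d) auto
  then have W: "Qclass w \<in> Qc" "w \<in> Qclass w" using Qclass_in_Qc Qclass_self by auto
  have "take (length c) w = c" "take (length w) d = w" using cd(3) long unfolding w_def by (simp_all add: min_def)
  then have "QL X (Qclass w)" "QL (Qclass w) Y" using Qle_iff XY W cd by blast+
  moreover have "Qrank (Qclass w) = Suc (Qrank X)" using Qtop(2)[OF W] Qtop(2)[OF XY(1) cd(1)] long w_def by simp
  then have "X \<noteq> Qclass w" "Qclass w \<noteq> Y" using not_suc by auto
  ultimately show False using cv W unfolding covers_def lt_def by blast
qed

lemma graded_Qc: "graded_zero Qc QL {[z]}"
  unfolding graded_zero_def has_zero_def
  using porder_Qc zero_in_Qc Qle_zero Qrank_zero Qrank_covers by blast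

lemma rank_Qc: "X \<in> Qc \<Longrightarrow> rank Qc QL {[z]} X = Qrank X"
  using rank_eq_grading[of Qc QL "{[z]}" Qrank, OF finite_Qc porder_Qc _ Qrank_covers Qrank_zero]
    zero_in_Qc Qle_zero unfolding has_zero_def by blast

subsection \<open>The Moebius function of \<open>P\<close>\<close>

definition incr_chain :: "'a \<Rightarrow> 'a \<Rightarrow> 'a list" where
  "incr_chain x y = (THE c. max_chain P le x y c \<and> increasing lle lam c)"

lemma incr_chain_ex1:
  "x \<in> P \<Longrightarrow> y \<in> P \<Longrightarrow> le x y \<Longrightarrow> \<exists>!c. max_chain P le x y c \<and> increasing lle lam c"
  using ER_labeling_lam unfolding ER_labeling_def by blast

lemma incr_chain:
  assumes "x \<in> P" "y \<in> P" "le x y"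
  shows "max_chain P le x y (incr_chain x y)" "increasing lle lam (incr_chain x y)"
  using theI'[OF incr_chain_ex1[OF assms]] unfolding incr_chain_def by simp_all

lemma incr_chain_unique:
  assumes "max_chain P le x y c" "increasing lle lam c"
  shows "c = incr_chain x y"
  unfolding incr_chain_def
  using the1_equality[OF incr_chain_ex1[OF max_chain_interval[OF assms(1)]]] assms by simp

lemma ascent_take: "i < j \<Longrightarrow> ascent lle lam (take (Suc j) m) i \<longleftrightarrow> ascent lle lam m i"
  unfolding ascent_def by auto

lemma ascent_drop: "ascent lle lam (drop j m) i \<longleftrightarrow> 0 < i \<and> ascent lle lam m (j + i)"
  unfolding ascent_def by (auto simp: algebra_simps)

lemma ascent_free_take:
  "ascent_free (take (Suc j) m) \<longleftrightarrow> (\<forall>i. 0 < i \<and> i < j \<longrightarrow> \<not> ascent lle lam m i)"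
proof -
  have "ascent lle lam (take (Suc j) m) i \<Longrightarrow> i < j" for i unfolding ascent_def by auto
  then show ?thesis unfolding ascent_free_above_def using ascent_take by blast
qed

lemma increasing_take:
  assumes c: "sat_chain P le c" and j: "j < length c"
  shows "increasing lle lam (take (Suc j) c) \<longleftrightarrow> (\<forall>i. 0 < i \<and> i < j \<longrightarrow> ascent lle lam c i)"
  using increasing_iff_ascents[OF sat_chain_take[OF c j]] ascent_take j by auto

lemma increasing_drop:
  assumes m: "sat_chain P le m" and j: "j < length m"
  shows "increasing lle lam (drop j m) \<longleftrightarrow> (\<forall>i. j < i \<and> i < length m - 1 \<longrightarrow> ascent lle lam m i)"
proof -
  have "increasing lle lam (drop j m) \<longleftrightarrow>
        (\<forall>i. 0 < i \<and> Suc i < length m - j \<longrightarrow> ascent lle lam m (j + i))"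
    using increasing_iff_ascents[OF sat_chain_drop[OF m j]] ascent_drop by simp
  also have "\<dots> \<longleftrightarrow> (\<forall>i. j < i \<and> i < length m - 1 \<longrightarrow> ascent lle lam m i)"
  proof safe
    fix i assume h: "\<forall>i. 0 < i \<and> Suc i < length m - j \<longrightarrow> ascent lle lam m (j + i)"
      and i: "j < i" "i < length m - 1"
    then show "ascent lle lam m i" using h[rule_format, of "i - j"] by simp
  qed auto
  finally show ?thesis .
qed

definition ascent_free_chains :: "'a \<Rightarrow> 'a list set" where
  "ascent_free_chains x = {c. max_chain P le z x c \<and> ascent_free c}"

lemma ascent_free_chains_zero: "ascent_free_chains z = {[z]}"
  unfolding ascent_free_chains_def ascent_free_iff
  using max_chain_same_ends sat_chain_singleton[OF z_in_P]
  by (auto simp: max_chain_def ascent_def)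

text \<open>Splitting a maximal chain \<open>m\<close> of \<open>[z, w]\<close> at position \<open>j\<close> into an ascent-free lower part and an
  increasing upper part is possible exactly at the switch positions of \<open>ascent m\<close>.\<close>

lemma alternating_sum_splits:
  assumes m: "max_chain P le z w m" and w: "w \<noteq> z"
  shows "(\<Sum>j\<in>{j. j < length m \<and> ascent_free (take (Suc j) m) \<and> increasing lle lam (drop j m)}.
           (-1::int) ^ j) = 0"
proof -
  have ms: "sat_chain P le m" "hd m = z" "last m = w" using m unfolding max_chain_def by auto
  define n where "n = length m - 1"
  have n: "length m = Suc n" "0 < n"
    using zero_chain_length[OF ms(1,2)] ms(3) rk_pos[OF max_chain_interval(2)[OF m] w] n_def by simp_all
  have "{j. j < length m \<and> ascent_free (take (Suc j) m) \<and> increasing lle lam (drop j m)} =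
        {j. j \<le> n \<and> (\<forall>i. 0 < i \<and> i < j \<longrightarrow> \<not> ascent lle lam m i) \<and> (\<forall>i. j < i \<and> i < n \<longrightarrow> ascent lle lam m i)}"
    using ascent_free_take increasing_drop[OF ms(1)] n(1) by (auto simp: less_Suc_eq_le)
  then show ?thesis using alternating_sum_switch_positions[OF n(2)] by simp
qed

definition ascent_free_below :: "'a \<Rightarrow> 'a list set" where
  "ascent_free_below w = {c \<in> CPz. le (last c) w \<and> ascent_free c}"

definition chain_splits :: "'a \<Rightarrow> ('a list \<times> nat) set" where
  "chain_splits w = {(m, j). max_chain P le z w m \<and> j < length m \<and>
     ascent_free (take (Suc j) m) \<and> increasing lle lam (drop j m)}"

definition extend_incr :: "'a \<Rightarrow> 'a list \<Rightarrow> 'a list \<times> nat" where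
  "extend_incr w c = (c @ tl (incr_chain (last c) w), length c - 1)"

lemma extend_incr_in_chain_splits:
  assumes w: "w \<in> P" and c: "c \<in> ascent_free_below w"
  shows "extend_incr w c \<in> chain_splits w" "take (length c) (fst (extend_incr w c)) = c"
proof -
  have cs: "sat_chain P le c" "hd c = z" "le (last c) w" "ascent_free c" "c \<noteq> []"
    using c CP_iff sat_chainD unfolding ascent_free_below_def by auto
  define s where "s = incr_chain (last c) w"
  have s: "max_chain P le (last c) w s" "increasing lle lam s"
    using incr_chain[OF sat_chain_last_mem[OF cs(1)] w cs(3)] s_def by auto
  have ss: "sat_chain P le s" "hd s = last c" "last s = w" "s \<noteq> []"
    using s(1) sat_chainD unfolding max_chain_def by auto
  have "max_chain P le z w (c @ tl s)"
    using sat_chain_join[OF cs(1) ss(1)] cs ss last_append_tl[of s c] unfolding max_chain_def by auto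
  moreover have "take (Suc (length c - 1)) (c @ tl s) = c" "drop (length c - 1) (c @ tl s) = s"
    using drop_append_tl[OF cs(5) ss(4) ss(2)[symmetric]] cs(5) by simp_all
  moreover have "length c - 1 < length (c @ tl s)" "Suc (length c - 1) = length c"
    using cs(5) by (cases c; simp)+
  ultimately show "extend_incr w c \<in> chain_splits w" "take (length c) (fst (extend_incr w c)) = c"
    using cs(4) s(2) unfolding extend_incr_def chain_splits_def s_def by simp_all
qed

lemma chain_splits_subset:
  assumes w: "w \<in> P"
  shows "chain_splits w \<subseteq> extend_incr w ` ascent_free_below w"
proof clarify
  fix m j assume "(m, j) \<in> chain_splits w"
  then have m: "max_chain P le z w m" "j < length m" "ascent_free (take (Suc j) m)"
    "increasing lle lam (drop j m)" unfolding chain_splits_def by auto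
  have ms: "sat_chain P le m" "hd m = z" "last m = w" using m(1) unfolding max_chain_def by auto
  define c where "c = take (Suc j) m"
  have c: "max_chain P le z (m ! j) c" "length c = Suc j"
    using sat_chain_take_max_chain[OF ms(1) m(2)] ms(2) m(2) unfolding c_def by simp_all
  have "c \<in> ascent_free_below w"
    using c(1) max_chain_interval(3)[OF sat_chain_drop_max_chain[OF ms(1) m(2)]] ms(3) m(3)
    unfolding ascent_free_below_def max_chain_def CP_iff c_def by simp
  moreover have "drop j m = incr_chain (m ! j) w"
    using sat_chain_drop_max_chain[OF ms(1) m(2)] ms(3) m(4) by (simp add: incr_chain_unique)
  then have "extend_incr w c = (m, j)"
    using take_Suc_append_tl_drop[OF m(2)] c unfolding extend_incr_def c_def max_chain_def by simp
  ultimately show "(m, j) \<in> extend_incr w ` ascent_free_below w" by (rule rev_image_eqI[OF _ sym])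
qed

lemma extend_incr_bij:
  assumes w: "w \<in> P"
  shows "bij_betw (extend_incr w) (ascent_free_below w) (chain_splits w)"
proof (rule bij_betw_imageI)
  show "inj_on (extend_incr w) (ascent_free_below w)"
  proof (rule inj_onI)
    fix c d assume cd: "c \<in> ascent_free_below w" "d \<in> ascent_free_below w"
      "extend_incr w c = extend_incr w d"
    have "c \<noteq> []" "d \<noteq> []" using cd(1,2) CP_iff sat_chainD unfolding ascent_free_below_def by auto
    moreover have "length c - 1 = length d - 1" using cd(3) unfolding extend_incr_def by simp
    ultimately have "length c = length d" by (cases c; cases d) simp_all
    then have "c = take (length d) (fst (extend_incr w d))"
      using extend_incr_in_chain_splits(2)[OF w cd(1)] cd(3) by simp
    then show "c = d" using extend_incr_in_chain_splits(2)[OF w cd(2)] by simp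
  qed
  show "extend_incr w ` ascent_free_below w = chain_splits w"
    using extend_incr_in_chain_splits(1)[OF w] chain_splits_subset[OF w] by blast
qed

lemma sum_ascent_free_chains_interval:
  assumes w: "w \<in> P" "w \<noteq> z"
  shows "(\<Sum>u\<in>{u\<in>P. le z u \<and> le u w}. (-1::int) ^ rk u * int (card (ascent_free_chains u))) = 0"
proof -
  define M where "M = {m. max_chain P le z w m}"
  define J where "J = (\<lambda>m. {j. j < length m \<and> ascent_free (take (Suc j) m) \<and> increasing lle lam (drop j m)})"
  have "ascent_free_below w \<subseteq> CPz" "M \<subseteq> CPz"
    unfolding ascent_free_below_def M_def max_chain_def CP_def by auto
  then have fin: "finite (ascent_free_below w)" "finite M" "\<forall>m\<in>M. finite (J m)"
    using finite_subset[OF _ finite_CP] unfolding J_def by auto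
  have "chain_splits w = Sigma M J" unfolding chain_splits_def M_def J_def by auto
  have classes: "{c \<in> ascent_free_below w. last c = u} = ascent_free_chains u"
    if "u \<in> {u\<in>P. le z u \<and> le u w}" for u
    using that unfolding ascent_free_below_def ascent_free_chains_def max_chain_def CP_iff by auto
  have "(\<Sum>u\<in>{u\<in>P. le z u \<and> le u w}. (-1::int) ^ rk u * int (card (ascent_free_chains u)))
      = (\<Sum>u\<in>{u\<in>P. le z u \<and> le u w}. \<Sum>c\<in>{c \<in> ascent_free_below w. last c = u}. (-1::int) ^ (length c - 1))"
    using classes zero_chain_length by (intro sum.cong) (auto simp: ascent_free_chains_def max_chain_def)
  also have "\<dots> = (\<Sum>c\<in>ascent_free_below w. (-1::int) ^ (length c - 1))"
    using fin(1) finite_P sat_chain_last_mem z_le unfolding ascent_free_below_def CP_iff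
    by (intro sum.group) auto
  also have "\<dots> = (\<Sum>(m, j)\<in>Sigma M J. (-1::int) ^ j)"
    using sum.reindex_bij_betw[OF extend_incr_bij[OF w(1)], of "\<lambda>(m, j). (-1::int) ^ j"]
      \<open>chain_splits w = Sigma M J\<close> unfolding extend_incr_def by simp
  also have "\<dots> = (\<Sum>m\<in>M. \<Sum>j\<in>J m. (-1::int) ^ j)"
    using sum.Sigma[OF fin(2,3), of "\<lambda>m j. (-1::int) ^ j"] by simp
  also have "\<dots> = 0"
    using alternating_sum_splits[OF _ w(2)] unfolding M_def J_def by simp
  finally show ?thesis .
qed

lemma mobius_P:
  assumes "x \<in> P"
  shows "mobius P le z x = (-1) ^ rk x * int (card (ascent_free_chains x))"
proof -
  define g where "g = (\<lambda>u. if u \<in> P then (-1::int) ^ rk u * int (card (ascent_free_chains u)) else 0)"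
  have "mobius P le z x = g x"
  proof (rule mobius_eqI[OF finite_P porder_P])
    show "g w \<noteq> 0 \<Longrightarrow> w \<in> P \<and> le z w" for w unfolding g_def using z_le by (auto split: if_splits)
  next
    fix w assume w: "w \<in> P" "le z w"
    show "(\<Sum>u\<in>{u\<in>P. le z u \<and> le u w}. g u) = (if w = z then 1 else 0)"
    proof (cases "w = z")
      case True
      then have "{u\<in>P. le z u \<and> le u w} = {z}" using z_in_P porderD(1,2)[OF porder_P] by auto
      then show ?thesis using True ascent_free_chains_zero rk_zero z_in_P unfolding g_def by simp
    next
      case False
      then show ?thesis using sum_ascent_free_chains_interval[OF w(1) False] unfolding g_def by simp
    qed
  qed
  then show ?thesis using assms g_def by simp
qed

subsection \<open>The Moebius function of \<open>Q\<^sub>\<lambda>(P)\<close>\<close>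

lemma alternating_sum_increasing_prefixes:
  assumes c: "c \<in> CPz" and len: "1 < length c"
  shows "(\<Sum>j\<in>{j. j < length c \<and> increasing lle lam (take (Suc j) c) \<and> ascent_free_above j c}.
           (-1::int) ^ j) = 0"
proof -
  define n where "n = length c - 1"
  have n: "length c = Suc n" "0 < n" using len n_def by simp_all
  have "ascent lle lam c i \<Longrightarrow> i < n" for i unfolding ascent_def n_def by auto
  then have "{j. j < length c \<and> increasing lle lam (take (Suc j) c) \<and> ascent_free_above j c} =
        {j. j \<le> n \<and> (\<forall>i. 0 < i \<and> i < j \<longrightarrow> \<not> \<not> ascent lle lam c i) \<and>
            (\<forall>i. j < i \<and> i < n \<longrightarrow> \<not> ascent lle lam c i)}"
    using increasing_take c n(1) unfolding ascent_free_above_def CP_iff by (auto simp: less_Suc_eq_le)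
  then show ?thesis using alternating_sum_switch_positions[OF n(2), of "\<lambda>i. \<not> ascent lle lam c i"] by simp
qed

lemma Qclass_take:
  assumes c: "c \<in> CPz" and j: "j < length c"
  shows "take (Suc j) c \<in> CPz" "Qclass (take (Suc j) c) \<in> Qc" "Qtop (Qclass (take (Suc j) c)) = c ! j"
    "Qrank (Qclass (take (Suc j) c)) = j"
proof -
  have p: "take (Suc j) c \<in> CPz" "length (take (Suc j) c) = Suc j"
    using sat_chain_take[OF _ j] c j unfolding CP_iff by (auto simp: hd_conv_nth)
  then show "take (Suc j) c \<in> CPz" "Qclass (take (Suc j) c) \<in> Qc"
    "Qtop (Qclass (take (Suc j) c)) = c ! j" "Qrank (Qclass (take (Suc j) c)) = j"
    using Qclass_in_Qc Qtop[OF Qclass_in_Qc Qclass_self, OF p(1)] last_take_Suc[OF j] by auto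
qed

definition incr_splits :: "'a list set \<Rightarrow> ('a list \<times> nat) set" where
  "incr_splits Y = {(c, j). c \<in> Y \<and> j < length c \<and> increasing lle lam (take (Suc j) c) \<and>
     ascent_free_above j c}"

definition incr_classes_below :: "'a list set \<Rightarrow> 'a list set set" where
  "incr_classes_below Y = {X \<in> Qc. QL X Y \<and> incr_chain z (Qtop X) \<in> X}"

definition prefix_class :: "'a list \<times> nat \<Rightarrow> 'a list set" where
  "prefix_class = (\<lambda>(c, j). Qclass (take (Suc j) c))"

lemma prefix_class_in_incr_classes_below:
  assumes Y: "Y \<in> Qc" and cj: "(c, j) \<in> incr_splits Y"
  shows "prefix_class (c, j) \<in> incr_classes_below Y"
proof -
  have c: "c \<in> Y" "j < length c" "increasing lle lam (take (Suc j) c)"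
    using cj unfolding incr_splits_def by auto
  have cs: "c \<in> CPz" using QcE(1)[OF Y c(1)] .
  note X = Qclass_take[OF cs c(2)]
  have "take (Suc j) c = incr_chain z (c ! j)"
    using sat_chain_take_max_chain[of P le c j] cs c(2,3) unfolding CP_iff by (simp add: incr_chain_unique)
  then have "incr_chain z (Qtop (prefix_class (c, j))) \<in> prefix_class (c, j)"
    using X(3) Qclass_self[OF X(1)] unfolding prefix_class_def by simp
  moreover have "QL (prefix_class (c, j)) Y"
    unfolding Qle_iff prefix_class_def using X(2) Y c(1,2) Qclass_self[OF X(1)] by force
  ultimately show ?thesis using X(2) unfolding incr_classes_below_def prefix_class_def by simp
qed

text \<open>Injectivity is where cancellation and the uniqueness of normal forms above \<open>j\<close> are used.\<close>

lemma inj_on_prefix_class: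
  assumes Y: "Y \<in> Qc"
  shows "inj_on prefix_class (incr_splits Y)"
proof (rule inj_onI)
  fix a a' assume a: "a \<in> incr_splits Y" "a' \<in> incr_splits Y" and eq: "prefix_class a = prefix_class a'"
  obtain c j c' j' where pairs: "a = (c, j)" "a' = (c', j')" by (cases a, cases a')
  have c: "c \<in> Y" "j < length c" "increasing lle lam (take (Suc j) c)" "ascent_free_above j c"
    using a(1) pairs unfolding incr_splits_def by auto
  have c': "c' \<in> Y" "j' < length c'" "increasing lle lam (take (Suc j') c')" "ascent_free_above j' c'"
    using a(2) pairs unfolding incr_splits_def by auto
  have cs: "c \<in> CPz" "c' \<in> CPz" using QcE(1) Y c(1) c'(1) by auto
  have jj: "j = j'" using Qclass_take(4)[OF cs(1) c(2)] Qclass_take(4)[OF cs(2) c'(2)] eq pairs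
    unfolding prefix_class_def by simp
  have top: "c' ! j = c ! j" using Qclass_take(3)[OF cs(1) c(2)] Qclass_take(3)[OF cs(2) c'(2)] eq pairs jj
    unfolding prefix_class_def by simp
  have "take (Suc j) c = incr_chain z (c ! j)" "take (Suc j) c' = incr_chain z (c ! j)"
    using sat_chain_take_max_chain[of P le c j] sat_chain_take_max_chain[of P le c' j] cs c(2,3) c'(2,3)
    unfolding CP_iff jj[symmetric] top by (simp_all add: incr_chain_unique)
  moreover have "equivclp (exch_above 0) c c'" using Qc_same_class[OF Y c(1) c'(1)] by simp
  ultimately have "equivclp (exch_above j) c c'"
    using equivclp_exch_above_cancel[OF cs(1) _ c(2)] by simp
  then show "a = a'" using ascent_free_above_unique c(4) c'(4) jj pairs by blast
qed

lemma incr_classes_below_subset: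
  assumes Y: "Y \<in> Qc"
  shows "incr_classes_below Y \<subseteq> prefix_class ` incr_splits Y"
proof
  fix X assume "X \<in> incr_classes_below Y"
  then have X: "X \<in> Qc" "QL X Y" "incr_chain z (Qtop X) \<in> X" unfolding incr_classes_below_def by auto
  define q where "q = incr_chain z (Qtop X)"
  have q: "q \<in> X" "increasing lle lam q"
    using X(3) incr_chain(2)[OF z_in_P Qtop_in_P[OF X(1)] z_le[OF Qtop_in_P[OF X(1)]]] q_def by auto
  have qs: "sat_chain P le q" "hd q = z" "q \<noteq> []" using QcE(1)[OF X(1) q(1)] CP_iff sat_chainD by auto
  define j where "j = length q - 1"
  have jq: "Suc j = length q" using qs j_def by simp
  obtain d where d: "d \<in> Y" "take (length q) d = q"
    using Qprefix_representative X(2)[unfolded Qle_iff_Qprefix] q(1) by blast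
  have dC: "d \<in> CPz" using QcE(1)[OF Y d(1)] .
  obtain e where e: "(exch_above j)\<^sup>*\<^sup>* d e" "ascent_free_above j e"
    using ascent_free_above_exists[of d j] dC CP_iff by blast
  have de: "equivclp (exch_above j) d e" using e(1) by (rule rtranclp_into_equivclp)
  have "equivclp (exch_above 0) d e" using equivclp_exch_above_mono[OF de] .
  then have "e \<in> Y" using QcE(2)[OF Y d(1)] Qclass_iff dC by simp
  moreover have "take (Suc j) e = q" "length e = length d"
    using equivclp_exch_above_props(3,4)[OF de dC] d(2) jq by simp_all
  moreover have "j < length d" using length_le_if_take_eq[OF d(2)] jq by simp
  ultimately have "(e, j) \<in> incr_splits Y" using q(2) e(2) unfolding incr_splits_def by simp
  moreover have "prefix_class (e, j) = X"
    using \<open>take (Suc j) e = q\<close> QcE(2)[OF X(1) q(1)] unfolding prefix_class_def by simp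
  ultimately show "X \<in> prefix_class ` incr_splits Y" by (rule rev_image_eqI[OF _ sym])
qed

lemma prefix_class_bij:
  "Y \<in> Qc \<Longrightarrow> bij_betw prefix_class (incr_splits Y) (incr_classes_below Y)"
  using inj_on_prefix_class prefix_class_in_incr_classes_below incr_classes_below_subset
  by (intro bij_betw_imageI) fast+

lemma sum_Qc_interval:
  assumes Y: "Y \<in> Qc" "Y \<noteq> {[z]}"
  shows "(\<Sum>X\<in>{X\<in>Qc. QL {[z]} X \<and> QL X Y}.
           if incr_chain z (Qtop X) \<in> X then (-1::int) ^ Qrank X else 0) = 0"
proof -
  define J where "J = (\<lambda>c. {j. j < length c \<and> increasing lle lam (take (Suc j) c) \<and> ascent_free_above j c})"
  have finY: "finite Y" using finite_subset[OF _ finite_CP] QcE(1)[OF Y(1)] by blast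
  have splits: "incr_splits Y = Sigma Y J" unfolding incr_splits_def J_def by auto
  have rk_Y: "0 < Qrank Y"
    using Qle_Qrank(2)[OF Qle_zero[OF Y(1)]] Qrank_zero Y(2) by (metis neq0_conv)
  have "(\<Sum>X\<in>{X\<in>Qc. QL {[z]} X \<and> QL X Y}. if incr_chain z (Qtop X) \<in> X then (-1::int) ^ Qrank X else 0)
      = (\<Sum>X\<in>incr_classes_below Y. (-1::int) ^ Qrank X)"
    using finite_subset[OF _ finite_Qc] Qle_zero unfolding incr_classes_below_def
    by (intro sum.mono_neutral_cong_right) auto
  also have "\<dots> = (\<Sum>a\<in>Sigma Y J. (-1::int) ^ Qrank (prefix_class a))"
    using sum.reindex_bij_betw[OF prefix_class_bij[OF Y(1)], of "\<lambda>X. (-1::int) ^ Qrank X"] splits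
    by simp
  also have "\<dots> = (\<Sum>(c, j)\<in>Sigma Y J. (-1::int) ^ j)"
    using Qclass_take(4) QcE(1)[OF Y(1)] unfolding J_def prefix_class_def by (intro sum.cong) auto
  also have "\<dots> = (\<Sum>c\<in>Y. \<Sum>j\<in>J c. (-1::int) ^ j)"
    using sum.Sigma[OF finY, of J "\<lambda>c j. (-1::int) ^ j"] unfolding J_def by simp
  also have "\<dots> = 0"
  proof (rule sum.neutral, rule ballI)
    fix c assume c: "c \<in> Y"
    show "(\<Sum>j\<in>J c. (-1::int) ^ j) = 0"
      using alternating_sum_increasing_prefixes[OF QcE(1)[OF Y(1) c]] Qtop(2)[OF Y(1) c] rk_Y
      unfolding J_def by simp
  qed
  finally show ?thesis .
qed

lemma mobius_Qc:
  assumes "X \<in> Qc"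
  shows "mobius Qc QL {[z]} X = (if incr_chain z (Qtop X) \<in> X then (-1) ^ Qrank X else 0)"
proof -
  define g where "g = (\<lambda>X. if X \<in> Qc \<and> incr_chain z (Qtop X) \<in> X then (-1::int) ^ Qrank X else 0)"
  have "mobius Qc QL {[z]} X = g X"
  proof (rule mobius_eqI[OF finite_Qc porder_Qc])
    show "g Y \<noteq> 0 \<Longrightarrow> Y \<in> Qc \<and> QL {[z]} Y" for Y unfolding g_def using Qle_zero by (auto split: if_splits)
  next
    fix Y assume Y: "Y \<in> Qc" "QL {[z]} Y"
    show "(\<Sum>X\<in>{X\<in>Qc. QL {[z]} X \<and> QL X Y}. g X) = (if Y = {[z]} then 1 else 0)"
    proof (cases "Y = {[z]}")
      case True
      have "{X\<in>Qc. QL {[z]} X \<and> QL X Y} = {{[z]}}"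
      proof (intro equalityI subsetI)
        fix X assume X: "X \<in> {X\<in>Qc. QL {[z]} X \<and> QL X Y}"
        then have "Qrank X = Qrank {[z]}" using Qle_Qrank(1)[of X Y] Qrank_zero True by simp
        then show "X \<in> {{[z]}}" using Qle_Qrank(2)[of "{[z]}" X] X by simp
      qed (use True zero_in_Qc Qle_zero porderD(1)[OF porder_Qc] in auto)
      moreover have "Qtop {[z]} = z" using Qtop(1)[OF zero_in_Qc, of "[z]"] by simp
      moreover have "incr_chain z z = [z]"
        using incr_chain(1)[OF z_in_P z_in_P porderD(1)[OF porder_P z_in_P]] max_chain_same_ends by blast
      ultimately show ?thesis using True zero_in_Qc Qrank_zero unfolding g_def by simp
    next
      case False
      have "(\<Sum>X\<in>{X\<in>Qc. QL {[z]} X \<and> QL X Y}. g X) =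
          (\<Sum>X\<in>{X\<in>Qc. QL {[z]} X \<and> QL X Y}. if incr_chain z (Qtop X) \<in> X then (-1) ^ Qrank X else 0)"
        unfolding g_def by (rule sum.cong) auto
      then show ?thesis using sum_Qc_interval[OF Y(1) False] False by simp
    qed
  qed
  then show ?thesis using assms unfolding g_def by simp
qed

subsection \<open>Whitney numbers\<close>

lemma whitney_W_P: "whitney_W P le z k = card {x\<in>P. rk x = k}"
  unfolding whitney_W_def by simp

lemma whitney_w_P:
  "whitney_w P le z k = (-1) ^ k * int (card {c \<in> CPz. length c = Suc k \<and> ascent_free c})"
proof -
  define A where "A = {c \<in> CPz. length c = Suc k \<and> ascent_free c}"
  have finA: "finite A" using finite_subset[OF _ finite_CP] unfolding A_def by auto
  have classes: "ascent_free_chains x = {c \<in> A. last c = x}" if "x \<in> {x\<in>P. rk x = k}" for x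
    using that zero_chain_length unfolding ascent_free_chains_def A_def max_chain_def CP_iff by auto
  have "last ` A \<subseteq> {x\<in>P. rk x = k}"
    using sat_chain_last_mem zero_chain_length unfolding A_def CP_iff by fastforce
  then have "card A = (\<Sum>x\<in>{x\<in>P. rk x = k}. card {c \<in> A. last c = x})"
    using sum.group[OF finA _ _, of "{x\<in>P. rk x = k}" last "\<lambda>_. 1::nat"] finite_P by simp
  then have "card A = (\<Sum>x\<in>{x\<in>P. rk x = k}. card (ascent_free_chains x))"
    using classes by simp
  moreover have "whitney_w P le z k = (\<Sum>x\<in>{x\<in>P. rk x = k}. (-1) ^ k * int (card (ascent_free_chains x)))"
    unfolding whitney_w_def by (rule sum.cong) (auto simp: mobius_P)
  ultimately show ?thesis unfolding A_def by (simp add: sum_distrib_left)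
qed

lemma whitney_W_Qc:
  "whitney_W Qc QL {[z]} k = card {c \<in> CPz. length c = Suc k \<and> ascent_free c}"
proof -
  define A where "A = {c \<in> CPz. length c = Suc k \<and> ascent_free c}"
  have "Qclass ` A = {X\<in>Qc. Qrank X = k}"
  proof
    show "Qclass ` A \<subseteq> {X\<in>Qc. Qrank X = k}"
      using Qclass_in_Qc Qtop(2)[OF Qclass_in_Qc Qclass_self] unfolding A_def by auto
    show "{X\<in>Qc. Qrank X = k} \<subseteq> Qclass ` A"
    proof clarify
      fix X assume X: "X \<in> Qc" "k = Qrank X"
      obtain c where c: "c \<in> X" using Qc_nonempty[OF X(1)] by blast
      have cC: "c \<in> CPz" using QcE(1)[OF X(1) c] .
      obtain d where d: "(exch_above 0)\<^sup>*\<^sup>* c d" "ascent_free d"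
        using ascent_free_above_exists[of c 0] cC CP_iff by blast
      have "d \<in> X" using QcE(2)[OF X(1) c] Qclass_iff cC rtranclp_into_equivclp[OF d(1)] by simp
      then have "d \<in> A" "X = Qclass d" using QcE[OF X(1)] Qtop(2)[OF X(1)] X(2) d(2) unfolding A_def by auto
      then show "X \<in> Qclass ` A" by blast
    qed
  qed
  moreover have "inj_on Qclass A"
  proof (rule inj_onI)
    fix c d assume cd: "c \<in> A" "d \<in> A" "Qclass c = Qclass d"
    then have "d \<in> Qclass c" using Qclass_self[of d] unfolding A_def by simp
    then have "equivclp (exch_above 0) c d" using Qclass_iff by simp
    then show "c = d" using ascent_free_above_unique cd unfolding A_def by auto
  qed
  then have "card (Qclass ` A) = card A" by (rule card_image)
  moreover have "{X\<in>Qc. rank Qc QL {[z]} X = k} = {X\<in>Qc. Qrank X = k}" using rank_Qc by auto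
  ultimately show ?thesis unfolding whitney_W_def A_def[symmetric] by simp
qed

lemma incr_chain_from_zero:
  assumes "x \<in> P"
  shows "incr_chain z x \<in> CPz" "Qtop (Qclass (incr_chain z x)) = x"
proof -
  show c: "incr_chain z x \<in> CPz"
    using incr_chain(1)[OF z_in_P assms z_le[OF assms]] unfolding max_chain_def CP_iff by auto
  show "Qtop (Qclass (incr_chain z x)) = x"
    using Qtop(1)[OF Qclass_in_Qc[OF c] Qclass_self[OF c]] incr_chain(1)[OF z_in_P assms z_le[OF assms]]
    unfolding max_chain_def by simp
qed

lemma incr_class_bij:
  "bij_betw (\<lambda>x. Qclass (incr_chain z x)) {x\<in>P. rk x = k}
     {X\<in>Qc. Qrank X = k \<and> incr_chain z (Qtop X) \<in> X}"
proof (rule bij_betw_imageI)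
  show "inj_on (\<lambda>x. Qclass (incr_chain z x)) {x\<in>P. rk x = k}"
    using incr_chain_from_zero(2) by (rule inj_on_inverseI) simp
  show "(\<lambda>x. Qclass (incr_chain z x)) ` {x\<in>P. rk x = k} = {X\<in>Qc. Qrank X = k \<and> incr_chain z (Qtop X) \<in> X}"
  proof (intro equalityI subsetI)
    fix X assume "X \<in> {X\<in>Qc. Qrank X = k \<and> incr_chain z (Qtop X) \<in> X}"
    then have X: "X \<in> Qc" "rk (Qtop X) = k" "incr_chain z (Qtop X) \<in> X" unfolding Qrank_def by auto
    show "X \<in> (\<lambda>x. Qclass (incr_chain z x)) ` {x\<in>P. rk x = k}"
    proof (rule image_eqI)
      show "X = Qclass (incr_chain z (Qtop X))" using QcE(2)[OF X(1,3)] .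
      show "Qtop X \<in> {x\<in>P. rk x = k}" using Qtop_in_P[OF X(1)] X(2) by simp
    qed
  qed (use incr_chain_from_zero Qclass_in_Qc Qclass_self in \<open>auto simp: Qrank_def\<close>)
qed

lemma whitney_w_Qc: "whitney_w Qc QL {[z]} k = (-1) ^ k * int (card {x\<in>P. rk x = k})"
proof -
  define E where "E = {X\<in>Qc. Qrank X = k \<and> incr_chain z (Qtop X) \<in> X}"
  have "whitney_w Qc QL {[z]} k
      = (\<Sum>X\<in>{X\<in>Qc. Qrank X = k}. if incr_chain z (Qtop X) \<in> X then (-1) ^ k else 0)"
    unfolding whitney_w_def using rank_Qc mobius_Qc by (intro sum.cong) auto
  also have "\<dots> = (\<Sum>X\<in>E. (-1) ^ k)"
    using finite_subset[OF _ finite_Qc] unfolding E_def by (intro sum.mono_neutral_cong_right) auto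
  finally show ?thesis using bij_betw_same_card[OF incr_class_bij] unfolding E_def by simp
qed

theorem Qc_whitney_dual: "graded_zero Qc QL {[z]} \<and> whitney_duals P le z Qc QL {[z]}"
  unfolding whitney_duals_def
  using graded_Qc whitney_w_P whitney_W_Qc whitney_w_Qc whitney_W_P
  by (simp add: abs_mult power_abs)

end

theorem theorem3p27:
  fixes P :: "'a set" and le :: "'a \<Rightarrow> 'a \<Rightarrow> bool" and z :: 'a
    and L :: "'l set" and lle :: "'l \<Rightarrow> 'l \<Rightarrow> bool" and lam :: "'a \<Rightarrow> 'a \<Rightarrow> 'l"
  assumes "finite P"
    and "graded_zero P le z"
    and "porder L lle"
    and "\<forall>x y. covers P le x y \<longrightarrow> lam x y \<in> L"
    and "generalized_EW_labeling P le z lle lam"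
  shows "graded_zero (Qcarrier P le z lle lam) (Qle P le z lle lam) {[z]} \<and>
         whitney_duals P le z (Qcarrier P le z lle lam) (Qle P le z lle lam) {[z]}"
proof -
  interpret EW_labeled_poset P le z L lle lam using assms by unfold_locales
  show ?thesis by (rule Qc_whitney_dual)
qed

end
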